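(* Let $\varphi:\mathbb{R}^n\to\mathbb{R}$ be of class $\mathcal{C}^{1,1}$ and let $x^0\in\mathbb{R}^n$ be such that, with $\Omega:=\{x\in\mathbb{R}^n\mid \varphi(x)\le\varphi(x^0)\}$, for every $x\in\Omega$ the mapping $\partial^2\varphi(x)$ is positive-definite, i.e. $\langle z,u\rangle>0$ for all $u\neq0$ and all $z\in\partial^2\varphi(x)(u)$. Then: (i) any sequence $\{x^k\}$ generated by the Generalized Damped Newton Algorithm (with $\sigma\in(0,\tfrac12)$, $\beta\in(0,1)$) from $x^0$ is well-defined and $x^k\in\Omega$ for all $k$; (ii) all limiting points of $\{x^k\}$ are tilt-stable local minimizers of $\varphi$.
   Context: A function $\varphi:\mathbb{R}^n\to\mathbb{R}$ is of class $\mathcal{C}^{1,1}$ if it is continuously differentiable and $\nabla\varphi$ is Lipschitz continuous around every point. For $\Omega\subset\mathbb{R}^s$ and $\bar z\in\Omega$, the regular normal cone is $\widehat N_\Omega(\bar z):=\{v\mid \limsup_{z\to\bar z,\,z\in\Omega}\langle v,z-\bar z\rangle/\|z-\bar z\|\le 0\}$ and the limiting normal cone $N_\Omega(\bar z)$ is the set of all $v$ for which there exist $z_k\to\bar z$ with $z_k\in\Omega$ and $v_k\to v$ with $v_k\in\widehat N_\Omega(z_k)$. For $F:\mathbb{R}^n\rightrightarrows\mathbb{R}^m$ and $(\bar x,\bar y)\in\operatorname{gph}F$, $D^*F(\bar x,\bar y)(v):=\{u\mid (u,-v)\in N_{\operatorname{gph}F}(\bar x,\bar y)\}$. For $\varphi$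 of class $\mathcal{C}^{1,1}$, $\partial^2\varphi(x)(u):=D^*(\nabla\varphi)(x,\nabla\varphi(x))(u)$. A point $\bar x$ is a tilt-stable local minimizer of $\varphi$ if there is $\gamma>0$ such that $M_\gamma(v):=\operatorname{argmin}\{\varphi(x)-\langle v,x\rangle\mid x\in\mathbb{B}_\gamma(\bar x)\}$ is single-valued and Lipschitz continuous on a neighborhood of $0$ with $M_\gamma(0)=\{\bar x\}$. Generalized Damped Newton Algorithm: given $\sigma\in(0,\tfrac12)$, $\beta\in(0,1)$ and $x^0$, set $k=0$. If $\nabla\varphi(x^k)=0$ stop. Otherwise choose $d^k$ with $-\nabla\varphi(x^k)\in\partial^2\varphi(x^k)(d^k)$; set $\tau_k=1$ and, while $\varphi(x^k+\tau_kd^k)>\varphi(x^k)+\sigma\tau_k\langle\nabla\varphi(x^k),d^k\rangle$, replace $\tau_k$ by $\beta\tau_k$; set $x^{k+1}:=x^k+\tau_kd^k$, increase $k$ by 1 and repeat. *)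

theory Defs
  imports "HOL-Analysis.Analysis"
begin

definition loc_lipschitz :: "('a::real_normed_vector \<Rightarrow> 'b::real_normed_vector) \<Rightarrow> bool" where
  "loc_lipschitz g \<longleftrightarrow>
     (\<forall>x. \<exists>r>0. \<exists>L. \<forall>y\<in>ball x r. \<forall>z\<in>ball x r. norm (g y - g z) \<le> L * norm (y - z))"

definition is_C11 :: "('a::euclidean_space \<Rightarrow> real) \<Rightarrow> ('a \<Rightarrow> 'a) \<Rightarrow> bool" where
  "is_C11 phi g \<longleftrightarrow>
     (\<forall>x. (phi has_derivative (\<lambda>h. g x \<bullet> h)) (at x)) \<and> continuous_on UNIV g \<and> loc_lipschitz g"

text \<open>Regular normal cone: limsup_{z -> zb, z in Omega} <v, z - zb>/|z - zb| <= 0.\<close>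
definition reg_normal :: "'a::real_inner set \<Rightarrow> 'a \<Rightarrow> 'a set" where
  "reg_normal \<Omega> zb = {v. \<forall>e>0. \<exists>\<delta>>0. \<forall>z\<in>\<Omega>. z \<noteq> zb \<and> norm (z - zb) < \<delta> \<longrightarrow>
        v \<bullet> (z - zb) / norm (z - zb) \<le> e}"

definition lim_normal :: "'a::real_inner set \<Rightarrow> 'a \<Rightarrow> 'a set" where
  "lim_normal \<Omega> zb = {v. \<exists>z w. (\<forall>k. z k \<in> \<Omega> \<and> w k \<in> reg_normal \<Omega> (z k)) \<and>
        z \<longlonglongrightarrow> zb \<and> w \<longlonglongrightarrow> v}"

definition gph :: "('a \<Rightarrow> 'b set) \<Rightarrow> ('a \<times> 'b) set" where
  "gph F = {(x, y). y \<in> F x}"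

definition coderiv :: "('a::real_inner \<Rightarrow> 'b::real_inner set) \<Rightarrow> 'a \<Rightarrow> 'b \<Rightarrow> 'b \<Rightarrow> 'a set" where
  "coderiv F x y v = {u. (u, - v) \<in> lim_normal (gph F) (x, y)}"

definition hess2 :: "('a::euclidean_space \<Rightarrow> 'a) \<Rightarrow> 'a \<Rightarrow> 'a \<Rightarrow> 'a set" where
  "hess2 g x u = coderiv (\<lambda>y. {g y}) x (g x) u"

definition M_tilt :: "('a::euclidean_space \<Rightarrow> real) \<Rightarrow> 'a \<Rightarrow> real \<Rightarrow> 'a \<Rightarrow> 'a set" where
  "M_tilt phi xb \<gamma> v = {x \<in> cball xb \<gamma>. \<forall>y\<in>cball xb \<gamma>. phi x - v \<bullet> x \<le> phi y - v \<bullet> y}"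

definition tilt_stable :: "('a::euclidean_space \<Rightarrow> real) \<Rightarrow> 'a \<Rightarrow> bool" where
  "tilt_stable phi xb \<longleftrightarrow>
     (\<exists>\<gamma>>0. \<exists>\<epsilon>>0. \<exists>m L.
        (\<forall>v\<in>ball 0 \<epsilon>. M_tilt phi xb \<gamma> v = {m v}) \<and>
        (\<forall>v\<in>ball 0 \<epsilon>. \<forall>w\<in>ball 0 \<epsilon>. norm (m v - m w) \<le> L * norm (v - w)) \<and>
        M_tilt phi xb \<gamma> 0 = {xb})"

definition armijo :: "('a::euclidean_space \<Rightarrow> real) \<Rightarrow> ('a \<Rightarrow> 'a) \<Rightarrow> real \<Rightarrow> real \<Rightarrow> 'a \<Rightarrow> 'a \<Rightarrow> nat \<Rightarrow> bool" where
  "armijo phi g \<sigma> \<beta> x d j \<longleftrightarrow>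
     phi (x + (\<beta> ^ j) *\<^sub>R d) \<le> phi x + \<sigma> * (\<beta> ^ j) * (g x \<bullet> d)"

text \<open>If the gradient
  vanishes the algorithm stops; we then extend the sequence constantly.\<close>
definition gdn_step :: "('a::euclidean_space \<Rightarrow> real) \<Rightarrow> ('a \<Rightarrow> 'a) \<Rightarrow> real \<Rightarrow> real \<Rightarrow> 'a \<Rightarrow> 'a \<Rightarrow> bool" where
  "gdn_step phi g \<sigma> \<beta> x x' \<longleftrightarrow>
     (g x = 0 \<and> x' = x) \<or>
     (g x \<noteq> 0 \<and> (\<exists>d. - g x \<in> hess2 g x d \<and> (\<exists>j. armijo phi g \<sigma> \<beta> x d j) \<and>
          x' = x + (\<beta> ^ (LEAST j. armijo phi g \<sigma> \<beta> x d j)) *\<^sub>R d))"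

definition gdn_run :: "('a::euclidean_space \<Rightarrow> real) \<Rightarrow> ('a \<Rightarrow> 'a) \<Rightarrow> real \<Rightarrow> real \<Rightarrow> 'a \<Rightarrow> (nat \<Rightarrow> 'a) \<Rightarrow> nat \<Rightarrow> bool" where
  "gdn_run phi g \<sigma> \<beta> x0 x N \<longleftrightarrow> x 0 = x0 \<and> (\<forall>k<N. gdn_step phi g \<sigma> \<beta> (x k) (x (Suc k)))"

end

theory Submission
  imports Defs
begin

(* Positive-definiteness of the second-order subdifferential at x propagates, by compactness, to a
   uniform bound kappa |a|^2 <= <w, a> for all regular coderivative elements w of the gradient g at
   points near x.  A penalization argument (a fuzzy mean value theorem) turns this bound into strong
   monotonicity of g on a ball, so phi is strongly convex there and the coderivative of g is
   surjective.  Hence on the sublevel set Newton directions exist, are descent directions, and the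
   Armijo backtracking terminates, which keeps the iterates in the sublevel set.  Near a limit point p
   with g p \<noteq> 0 every step would decrease phi by a fixed amount, contradicting the monotone
   convergence of phi along the iterates; so g p = 0, and a critical point of a strongly convex
   function is a tilt-stable minimizer. *)

section \<open>Regular and limiting coderivatives of the gradient\<close>

definition reg_hess2 :: "('a::euclidean_space \<Rightarrow> 'a) \<Rightarrow> 'a \<Rightarrow> 'a \<Rightarrow> 'a set" where
  "reg_hess2 g x u = {z. (z, - u) \<in> reg_normal (gph (\<lambda>y. {g y})) (x, g x)}"

lemma reg_hess2_I:
  fixes g :: "'a::euclidean_space \<Rightarrow> 'a"
  assumes "\<delta> > 0"
    and quadratic: "\<And>u. u \<in> ball y \<delta> \<Longrightarrow> w \<bullet> (u - y) - a \<bullet> (g u - g y) \<le> C * (norm (u - y))\<^sup>2"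
  shows "w \<in> reg_hess2 g y a"
  unfolding reg_hess2_def reg_normal_def
proof (intro CollectI allI impI)
  fix e :: real assume "e > 0"
  define C' where "C' = max C 1"
  have C': "C' > 0" "C \<le> C'" by (auto simp: C'_def)
  show "\<exists>\<delta>'>0. \<forall>p\<in>gph (\<lambda>y. {g y}). p \<noteq> (y, g y) \<and> norm (p - (y, g y)) < \<delta>' \<longrightarrow>
          (w, - a) \<bullet> (p - (y, g y)) / norm (p - (y, g y)) \<le> e"
  proof (intro exI[of _ "min \<delta> (e / C')"] conjI ballI impI)
    show "min \<delta> (e / C') > 0" using \<open>\<delta> > 0\<close> \<open>e > 0\<close> C' by simp
    fix p assume "p \<in> gph (\<lambda>y. {g y})" and p: "p \<noteq> (y, g y) \<and> norm (p - (y, g y)) < min \<delta> (e / C')"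
    then obtain u where u: "p = (u, g u)" by (auto simp: gph_def)
    define N where "N = norm (p - (y, g y))"
    have N: "0 < N" "N < \<delta>" "N < e / C'" using p by (auto simp: N_def)
    have uN: "norm (u - y) \<le> N"
      using norm_fst_le[of "u - y" "g u - g y"] by (simp add: N_def u)
    then have "u \<in> ball y \<delta>" using N by (simp add: dist_norm norm_minus_commute)
    have "(w, - a) \<bullet> (p - (y, g y)) = w \<bullet> (u - y) - a \<bullet> (g u - g y)" by (simp add: u)
    also have "\<dots> \<le> C * (norm (u - y))\<^sup>2" using quadratic[OF \<open>u \<in> ball y \<delta>\<close>] .
    also have "\<dots> \<le> C' * N\<^sup>2"
      using C' uN by (intro mult_mono power_mono) auto
    also have "\<dots> \<le> e * N"
      using N C' by (simp add: power2_eq_square pos_less_divide_eq mult.commute less_imp_le)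
    finally show "(w, - a) \<bullet> (p - (y, g y)) / norm (p - (y, g y)) \<le> e"
      using N by (simp add: N_def divide_le_eq)
  qed
qed

lemma reg_hess2_scaleR:
  assumes "w \<in> reg_hess2 g y a" "c > 0"
  shows "c *\<^sub>R w \<in> reg_hess2 g y (c *\<^sub>R a)"
proof -
  have "c *\<^sub>R (w, - a) \<in> reg_normal (gph (\<lambda>y. {g y})) (y, g y)"
    unfolding reg_normal_def
  proof (intro CollectI allI impI)
    fix e :: real assume "e > 0"
    then have "e / c > 0" using \<open>c > 0\<close> by simp
    then obtain \<delta> where "\<delta> > 0" and \<delta>: "\<forall>p\<in>gph (\<lambda>y. {g y}). p \<noteq> (y, g y) \<and> norm (p - (y, g y)) < \<delta> \<longrightarrow>
        (w, - a) \<bullet> (p - (y, g y)) / norm (p - (y, g y)) \<le> e / c"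
      using assms(1) unfolding reg_hess2_def reg_normal_def by blast
    show "\<exists>\<delta>>0. \<forall>p\<in>gph (\<lambda>y. {g y}). p \<noteq> (y, g y) \<and> norm (p - (y, g y)) < \<delta> \<longrightarrow>
        c *\<^sub>R (w, - a) \<bullet> (p - (y, g y)) / norm (p - (y, g y)) \<le> e"
    proof (intro exI[of _ \<delta>] conjI ballI impI \<open>\<delta> > 0\<close>)
      fix p assume "p \<in> gph (\<lambda>y. {g y})" "p \<noteq> (y, g y) \<and> norm (p - (y, g y)) < \<delta>"
      then have "(w, - a) \<bullet> (p - (y, g y)) / norm (p - (y, g y)) \<le> e / c" using \<delta> by blast
      then have "c * ((w, - a) \<bullet> (p - (y, g y)) / norm (p - (y, g y))) \<le> e"
        using \<open>c > 0\<close> by (simp add: pos_le_divide_eq mult.commute)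
      then show "c *\<^sub>R (w, - a) \<bullet> (p - (y, g y)) / norm (p - (y, g y)) \<le> e"
        by (simp only: inner_scaleR_left times_divide_eq_right)
    qed
  qed
  then show ?thesis by (simp add: reg_hess2_def)
qed

lemma reg_hess2_lipschitzD:
  fixes g :: "'a::euclidean_space \<Rightarrow> 'a"
  assumes "w \<in> reg_hess2 g y a" "L-lipschitz_on S g" "open S" "y \<in> S" "e > 0"
  obtains \<delta> where "\<delta> > 0" "\<And>u. u \<in> ball y \<delta> \<Longrightarrow> w \<bullet> (u - y) - a \<bullet> (g u - g y) \<le> e * norm (u - y)"
proof -
  obtain \<rho> where "\<rho> > 0" "ball y \<rho> \<subseteq> S" using assms(3,4) open_contains_ball by blast
  have L: "L \<ge> 0" using lipschitz_on_nonneg[OF assms(2)] .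
  then have "e / (1 + L) > 0" using \<open>e > 0\<close> by simp
  then obtain \<delta>' where "\<delta>' > 0" and \<delta>': "\<forall>p\<in>gph (\<lambda>y. {g y}). p \<noteq> (y, g y) \<and> norm (p - (y, g y)) < \<delta>' \<longrightarrow>
      (w, - a) \<bullet> (p - (y, g y)) / norm (p - (y, g y)) \<le> e / (1 + L)"
    using assms(1) unfolding reg_hess2_def reg_normal_def by blast
  show thesis
  proof (rule that[of "min \<rho> (\<delta>' / (1 + L))"])
    show "min \<rho> (\<delta>' / (1 + L)) > 0" using \<open>\<rho> > 0\<close> \<open>\<delta>' > 0\<close> L by simp
    fix u assume u: "u \<in> ball y (min \<rho> (\<delta>' / (1 + L)))"
    show "w \<bullet> (u - y) - a \<bullet> (g u - g y) \<le> e * norm (u - y)"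
    proof (cases "u = y")
      case False
      define N where "N = norm ((u, g u) - (y, g y))"
      have "norm (g u - g y) \<le> L * norm (u - y)"
        using lipschitz_on_normD[OF assms(2)] u \<open>ball y \<rho> \<subseteq> S\<close> assms(4) by auto
      then have N_le: "N \<le> (1 + L) * norm (u - y)"
        using norm_Pair_le[of "u - y" "g u - g y"] by (simp add: N_def algebra_simps)
      have "0 < N" using False by (simp add: N_def zero_prod_def)
      have "(1 + L) * norm (u - y) < \<delta>'"
        using u L by (simp add: dist_norm norm_minus_commute pos_less_divide_eq mult.commute)
      then have "(w, - a) \<bullet> ((u, g u) - (y, g y)) / N \<le> e / (1 + L)"
        using \<delta>' False N_le by (auto simp: gph_def N_def)
      then have "w \<bullet> (u - y) - a \<bullet> (g u - g y) \<le> e / (1 + L) * N"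
        using \<open>0 < N\<close> by (simp add: divide_le_eq)
      also have "\<dots> \<le> e / (1 + L) * ((1 + L) * norm (u - y))"
        using N_le \<open>e / (1 + L) > 0\<close> by (intro mult_left_mono) auto
      also have "\<dots> = e * norm (u - y)" using L by simp
      finally show ?thesis .
    qed simp
  qed
qed

lemma reg_hess2_norm_le:
  fixes g :: "'a::euclidean_space \<Rightarrow> 'a"
  assumes "L-lipschitz_on S g" "open S" "y \<in> S" "w \<in> reg_hess2 g y a"
  shows "norm w \<le> L * norm a"
proof (rule field_le_epsilon)
  fix e :: real assume "e > 0"
  obtain \<delta> where "\<delta> > 0" and \<delta>: "\<And>u. u \<in> ball y \<delta> \<Longrightarrow> w \<bullet> (u - y) - a \<bullet> (g u - g y) \<le> e * norm (u - y)"
    using reg_hess2_lipschitzD[OF assms(4,1,2,3) \<open>e > 0\<close>] by blast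
  obtain \<rho> where "\<rho> > 0" "ball y \<rho> \<subseteq> S" using assms(2,3) open_contains_ball by blast
  define t where "t = min \<delta> \<rho> / 2"
  define u where "u = y + t *\<^sub>R sgn w"
  have "t > 0" using \<open>\<delta> > 0\<close> \<open>\<rho> > 0\<close> by (simp add: t_def)
  have ut: "norm (u - y) \<le> t"
    using \<open>t > 0\<close> by (simp add: u_def norm_sgn mult_left_le)
  then have "u \<in> ball y \<delta>" "u \<in> S"
    using \<open>t > 0\<close> \<open>ball y \<rho> \<subseteq> S\<close> by (auto simp: t_def dist_norm norm_minus_commute)
  have L: "L \<ge> 0" using lipschitz_on_nonneg[OF assms(1)] .
  have "t * norm w = w \<bullet> (u - y)"
    by (simp add: u_def sgn_div_norm dot_square_norm power2_eq_square)
       (simp add: field_simps)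
  also have "\<dots> \<le> a \<bullet> (g u - g y) + e * norm (u - y)" using \<delta>[OF \<open>u \<in> ball y \<delta>\<close>] by simp
  also have "\<dots> \<le> norm a * (L * norm (u - y)) + e * norm (u - y)"
    using Cauchy_Schwarz_ineq2[of a "g u - g y"] lipschitz_on_normD[OF assms(1) \<open>u \<in> S\<close> assms(3)]
    by (smt (verit) mult_left_mono norm_ge_zero)
  also have "\<dots> = (L * norm a + e) * norm (u - y)" by (simp add: algebra_simps)
  also have "\<dots> \<le> (L * norm a + e) * t" using ut L \<open>e > 0\<close> by (intro mult_left_mono) auto
  finally have "t * norm w \<le> t * (L * norm a + e)" by (simp add: mult.commute)
  then show "norm w \<le> L * norm a + e" using \<open>t > 0\<close> by simp
qed

lemma hess2_iff: "z \<in> hess2 g x u \<longleftrightarrow> (z, - u) \<in> lim_normal (gph (\<lambda>y. {g y})) (x, g x)"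
  by (simp add: hess2_def coderiv_def)

lemma hess2_I:
  fixes g :: "'a::euclidean_space \<Rightarrow> 'a"
  assumes "isCont g x" "Y \<longlonglongrightarrow> x" "W \<longlonglongrightarrow> z" "A \<longlonglongrightarrow> u"
    and "\<And>k. W k \<in> reg_hess2 g (Y k) (A k)"
  shows "z \<in> hess2 g x u"
proof -
  have "(\<lambda>k. (Y k, g (Y k))) \<longlonglongrightarrow> (x, g x)"
    using tendsto_Pair[OF assms(2) isCont_tendsto_compose[OF assms(1,2)]] .
  moreover have "(\<lambda>k. (W k, - A k)) \<longlonglongrightarrow> (z, - u)"
    using assms(3,4) by (intro tendsto_Pair tendsto_minus)
  moreover have "(Y k, g (Y k)) \<in> gph (\<lambda>y. {g y}) \<and> (W k, - A k) \<in> reg_normal (gph (\<lambda>y. {g y})) (Y k, g (Y k))" for k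
    using assms(5) by (simp add: gph_def reg_hess2_def)
  ultimately show ?thesis
    unfolding hess2_iff lim_normal_def
    by (intro CollectI exI[where x = "\<lambda>k. (Y k, g (Y k))"] exI[where x = "\<lambda>k. (W k, - A k)"]) blast
qed

lemma hess2_E:
  assumes "z \<in> hess2 g x u"
  obtains Y W A where "Y \<longlonglongrightarrow> x" "W \<longlonglongrightarrow> z" "A \<longlonglongrightarrow> u" "\<And>k. W k \<in> reg_hess2 g (Y k) (A k)"
proof -
  obtain p v where pv: "\<And>k. p k \<in> gph (\<lambda>y. {g y})" "\<And>k. v k \<in> reg_normal (gph (\<lambda>y. {g y})) (p k)"
    and "p \<longlonglongrightarrow> (x, g x)" "v \<longlonglongrightarrow> (z, - u)"
    using assms by (auto simp: hess2_iff lim_normal_def)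
  have p: "p k = (fst (p k), g (fst (p k)))" for k
    using pv(1)[of k] by (cases "p k") (simp add: gph_def)
  show thesis
  proof (rule that[of "\<lambda>k. fst (p k)" "\<lambda>k. fst (v k)" "\<lambda>k. - snd (v k)"])
    show "(\<lambda>k. fst (p k)) \<longlonglongrightarrow> x" using tendsto_fst[OF \<open>p \<longlonglongrightarrow> (x, g x)\<close>] by simp
    show "(\<lambda>k. fst (v k)) \<longlonglongrightarrow> z" using tendsto_fst[OF \<open>v \<longlonglongrightarrow> (z, - u)\<close>] by simp
    show "(\<lambda>k. - snd (v k)) \<longlonglongrightarrow> u" using tendsto_minus[OF tendsto_snd[OF \<open>v \<longlonglongrightarrow> (z, - u)\<close>]] by simp
    show "fst (v k) \<in> reg_hess2 g (fst (p k)) (- snd (v k))" for k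
      using pv(2)[of k] p[of k] by (simp add: reg_hess2_def)
  qed
qed

lemma hess2_subseq_limit:
  fixes g :: "'a::euclidean_space \<Rightarrow> 'a"
  assumes "isCont g x" "Y \<longlonglongrightarrow> x" "\<And>k. W k \<in> reg_hess2 g (Y k) (A k)"
    and "bounded (range W)" "bounded (range A)"
  obtains s z u where "strict_mono s" "(W \<circ> s) \<longlonglongrightarrow> z" "(A \<circ> s) \<longlonglongrightarrow> u" "z \<in> hess2 g x u"
proof -
  have "bounded (range (\<lambda>k. (W k, A k)))"
    using bounded_Times[OF assms(4,5)] by (rule bounded_subset) auto
  then obtain l s where s: "strict_mono s" and l: "((\<lambda>k. (W k, A k)) \<circ> s) \<longlonglongrightarrow> l"
    using bounded_imp_convergent_subsequence by blast
  have W: "(W \<circ> s) \<longlonglongrightarrow> fst l" and A: "(A \<circ> s) \<longlonglongrightarrow> snd l"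
    using tendsto_fst[OF l] tendsto_snd[OF l] by (simp_all add: o_def)
  have "(Y \<circ> s) \<longlonglongrightarrow> x" using LIMSEQ_subseq_LIMSEQ[OF assms(2) s] .
  then have "fst l \<in> hess2 g x (snd l)"
    using hess2_I[OF assms(1) _ W A] assms(3) by (simp add: o_def)
  then show thesis using that s W A by blast
qed

lemma hess2_mem_closed:
  assumes "closed C" "open S" "x \<in> S" "z \<in> hess2 g x u"
    and "\<And>y a w. y \<in> S \<Longrightarrow> w \<in> reg_hess2 g y a \<Longrightarrow> (w, a) \<in> C"
  shows "(z, u) \<in> C"
proof -
  obtain Y W A where "Y \<longlonglongrightarrow> x" "W \<longlonglongrightarrow> z" "A \<longlonglongrightarrow> u" and WA: "\<And>k. W k \<in> reg_hess2 g (Y k) (A k)"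
    using hess2_E[OF assms(4)] by blast
  have "eventually (\<lambda>k. Y k \<in> S) sequentially"
    using topological_tendstoD[OF \<open>Y \<longlonglongrightarrow> x\<close> assms(2,3)] .
  then have "eventually (\<lambda>k. (W k, A k) \<in> C) sequentially"
    by eventually_elim (use WA assms(5) in blast)
  from Lim_in_closed_set[OF assms(1) this trivial_limit_sequentially]
  show ?thesis using \<open>W \<longlonglongrightarrow> z\<close> \<open>A \<longlonglongrightarrow> u\<close> by (simp add: tendsto_Pair)
qed

lemma hess2_norm_le:
  fixes g :: "'a::euclidean_space \<Rightarrow> 'a"
  assumes "L-lipschitz_on S g" "open S" "x \<in> S" "z \<in> hess2 g x u"
  shows "norm z \<le> L * norm u"
proof -
  have "closed {p :: 'a \<times> 'a. norm (fst p) \<le> L * norm (snd p)}"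
    by (intro closed_Collect_le continuous_intros)
  from hess2_mem_closed[OF this assms(2-4)] show ?thesis
    using reg_hess2_norm_le[OF assms(1,2)] by auto
qed

lemma hess2_inner_ge:
  fixes g :: "'a::euclidean_space \<Rightarrow> 'a"
  assumes "open S" "x \<in> S" "z \<in> hess2 g x u"
    and "\<And>y a w. y \<in> S \<Longrightarrow> w \<in> reg_hess2 g y a \<Longrightarrow> \<kappa> * (norm a)\<^sup>2 \<le> w \<bullet> a"
  shows "\<kappa> * (norm u)\<^sup>2 \<le> z \<bullet> u"
proof -
  have "closed {p :: 'a \<times> 'a. \<kappa> * (norm (snd p))\<^sup>2 \<le> fst p \<bullet> snd p}"
    by (intro closed_Collect_le continuous_intros)
  from hess2_mem_closed[OF this assms(1-3)] show ?thesis using assms(4) by auto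
qed

lemma loc_lipschitzE:
  assumes "loc_lipschitz g"
  obtains r L where "r > 0" "L-lipschitz_on (ball x r) g"
proof -
  obtain r L where "r > 0" and L: "\<forall>y\<in>ball x r. \<forall>z\<in>ball x r. norm (g y - g z) \<le> L * norm (y - z)"
    using assms unfolding loc_lipschitz_def by blast
  have "(max L 0)-lipschitz_on (ball x r) g"
  proof (rule lipschitz_onI)
    fix y z assume "y \<in> ball x r" "z \<in> ball x r"
    then have "norm (g y - g z) \<le> L * norm (y - z)" using L by blast
    also have "\<dots> \<le> max L 0 * norm (y - z)" by (intro mult_right_mono) auto
    finally show "dist (g y) (g z) \<le> max L 0 * dist y z" by (simp add: dist_norm)
  qed simp
  with \<open>r > 0\<close> show thesis by (rule that)
qed

section \<open>Uniform positivity near a point of positive-definiteness\<close>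

definition hess2_posdef :: "('a::euclidean_space \<Rightarrow> 'a) \<Rightarrow> 'a \<Rightarrow> bool" where
  "hess2_posdef g x \<longleftrightarrow> (\<forall>u z. u \<noteq> 0 \<and> z \<in> hess2 g x u \<longrightarrow> z \<bullet> u > 0)"

lemma reg_hess2_normalized:
  assumes "w \<in> reg_hess2 g y a" "w \<bullet> a < e * (norm a)\<^sup>2"
  shows "w /\<^sub>R norm a \<in> reg_hess2 g y (a /\<^sub>R norm a)" "norm (a /\<^sub>R norm a) = 1"
    "(w /\<^sub>R norm a) \<bullet> (a /\<^sub>R norm a) < e"
proof -
  have "a \<noteq> 0" using assms(2) by auto
  then show "w /\<^sub>R norm a \<in> reg_hess2 g y (a /\<^sub>R norm a)" "norm (a /\<^sub>R norm a) = 1"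
    using reg_hess2_scaleR[OF assms(1), of "inverse (norm a)"] by auto
  show "(w /\<^sub>R norm a) \<bullet> (a /\<^sub>R norm a) < e"
    using assms(2) \<open>a \<noteq> 0\<close> by (simp add: field_simps power2_eq_square)
qed

lemma reg_hess2_uniformly_pos:
  fixes g :: "'a::euclidean_space \<Rightarrow> 'a"
  assumes lip: "L-lipschitz_on (ball x r) g" and "r > 0" and pd: "hess2_posdef g x"
  obtains \<rho> \<kappa> where "\<rho> > 0" "\<kappa> > 0"
    "\<And>y a w. y \<in> ball x \<rho> \<Longrightarrow> w \<in> reg_hess2 g y a \<Longrightarrow> \<kappa> * (norm a)\<^sup>2 \<le> w \<bullet> a"
proof (rule ccontr)
  assume contra: "\<not> thesis"
  note uniform = that
  have "\<exists>y w a. y \<in> ball x (min r (inverse (real (Suc n)))) \<and> w \<in> reg_hess2 g y a \<and> norm a = 1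
          \<and> w \<bullet> a < inverse (real (Suc n))" for n
  proof -
    have pos: "min r (inverse (real (Suc n))) > 0" "inverse (real (Suc n)) > 0" using \<open>r > 0\<close> by auto
    obtain y a w where "y \<in> ball x (min r (inverse (real (Suc n))))" "w \<in> reg_hess2 g y a"
      "w \<bullet> a < inverse (real (Suc n)) * (norm a)\<^sup>2"
    proof -
      have "\<not> (\<forall>y a w. y \<in> ball x (min r (inverse (real (Suc n)))) \<longrightarrow> w \<in> reg_hess2 g y a \<longrightarrow>
               inverse (real (Suc n)) * (norm a)\<^sup>2 \<le> w \<bullet> a)"
        using contra uniform[OF pos] by blast
      then show thesis using that by (auto simp: not_le)
    qed
    with reg_hess2_normalized show ?thesis by blast
  qed
  then obtain Y W A where Y: "\<And>n. Y n \<in> ball x (min r (inverse (real (Suc n))))"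
    and W: "\<And>n. W n \<in> reg_hess2 g (Y n) (A n)" and A: "\<And>n. norm (A n) = 1"
    and WA: "\<And>n. W n \<bullet> A n < inverse (real (Suc n))"
    by metis
  have "(\<lambda>n. dist (Y n) x) \<longlonglongrightarrow> 0"
    by (rule tendsto_sandwich[OF _ _ tendsto_const LIMSEQ_inverse_real_of_nat])
       (use Y in \<open>auto simp: dist_commute less_imp_le\<close>)
  then have "Y \<longlonglongrightarrow> x" using tendsto_dist_iff by blast
  have "norm (W n) \<le> L" for n
    using reg_hess2_norm_le[OF lip open_ball _ W] Y A by simp
  then have "bounded (range W)" by (auto simp: bounded_iff)
  moreover have "bounded (range A)" using A by (auto simp: bounded_iff)
  moreover have "isCont g x"
    using continuous_on_interior[OF lipschitz_on_continuous_on[OF lip]] \<open>r > 0\<close> by simp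
  ultimately obtain s z u where s: "strict_mono s" and z: "(W \<circ> s) \<longlonglongrightarrow> z" and u: "(A \<circ> s) \<longlonglongrightarrow> u"
    and "z \<in> hess2 g x u"
    using hess2_subseq_limit[OF _ \<open>Y \<longlonglongrightarrow> x\<close> W] by blast
  have "norm u = 1"
    using tendsto_norm[OF u] A by (simp add: o_def LIMSEQ_const_iff)
  moreover have "z \<bullet> u \<le> 0"
  proof (rule LIMSEQ_le[OF tendsto_inner[OF z u]])
    show "(\<lambda>n. inverse (real (Suc (s n)))) \<longlonglongrightarrow> 0"
      using LIMSEQ_subseq_LIMSEQ[OF LIMSEQ_inverse_real_of_nat s] by (simp add: o_def)
  qed (use WA less_imp_le in auto)
  moreover have "u \<noteq> 0" using \<open>norm u = 1\<close> by auto
  ultimately show False using pd \<open>z \<in> hess2 g x u\<close> unfolding hess2_posdef_def by force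
qed

section \<open>Strong monotonicity of the gradient\<close>

definition strongly_monotone_on :: "real \<Rightarrow> 'a::real_inner set \<Rightarrow> ('a \<Rightarrow> 'a) \<Rightarrow> bool" where
  "strongly_monotone_on \<kappa> S g \<longleftrightarrow> (\<forall>y\<in>S. \<forall>z\<in>S. \<kappa> * (norm (y - z))\<^sup>2 \<le> (g y - g z) \<bullet> (y - z))"

lemma power2_norm_add: "(norm (x + y))\<^sup>2 = (norm x)\<^sup>2 + 2 * (x \<bullet> y) + (norm y)\<^sup>2"
  for x y :: "'a::real_inner"
  by (simp add: power2_norm_eq_inner inner_add_left inner_add_right inner_commute)

lemma add_scaleR_diff_in_ball:
  fixes y z :: "'a::real_normed_vector"
  assumes "y \<in> ball c r" "z \<in> ball c r" "0 \<le> t" "t \<le> 1"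
  shows "z + t *\<^sub>R (y - z) \<in> ball c r"
proof -
  have "(1 - t) *\<^sub>R z + t *\<^sub>R y \<in> ball c r"
    using convex_ball[of c r, unfolded convex_alt] assms by simp
  then show ?thesis by (simp add: algebra_simps)
qed

lemma lipschitz_on_inner_left:
  fixes f :: "'a::metric_space \<Rightarrow> 'b::real_inner"
  assumes "L-lipschitz_on S f"
  shows "(norm e * L)-lipschitz_on S (\<lambda>p. e \<bullet> f p)"
proof (rule lipschitz_onI)
  show "0 \<le> norm e * L" using lipschitz_on_nonneg[OF assms] by simp
  fix p q assume "p \<in> S" "q \<in> S"
  have "dist (e \<bullet> f p) (e \<bullet> f q) \<le> norm e * dist (f p) (f q)"
    using Cauchy_Schwarz_ineq2[of e "f p - f q"] by (simp add: dist_norm inner_diff_right)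
  also have "\<dots> \<le> norm e * (L * dist p q)"
    using lipschitz_onD[OF assms \<open>p \<in> S\<close> \<open>q \<in> S\<close>] by (simp add: mult_left_mono)
  finally show "dist (e \<bullet> f p) (e \<bullet> f q) \<le> norm e * L * dist p q" by (simp add: mult.assoc)
qed

lemma inner_nonneg_if_norm_le_add_scaleR:
  fixes v e :: "'a::real_inner"
  assumes "t > 0" and min: "\<And>h. 0 < h \<Longrightarrow> h \<le> t \<Longrightarrow> norm v \<le> norm (v + h *\<^sub>R e)"
  shows "0 \<le> v \<bullet> e"
proof (rule ccontr)
  assume "\<not> 0 \<le> v \<bullet> e"
  then have neg: "v \<bullet> e < 0" and "e \<noteq> 0" by auto
  define h where "h = min t (- (v \<bullet> e) / (norm e)\<^sup>2)"
  have "0 < h" "h \<le> t" using \<open>t > 0\<close> neg \<open>e \<noteq> 0\<close> by (auto simp: h_def divide_neg_pos)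
  have "h * (norm e)\<^sup>2 \<le> - (v \<bullet> e)"
    using \<open>e \<noteq> 0\<close> by (simp add: h_def min_le_iff_disj pos_le_divide_eq[symmetric])
  then have "h * (2 * (v \<bullet> e) + h * (norm e)\<^sup>2) < 0"
    using \<open>0 < h\<close> neg by (intro mult_pos_neg) auto
  moreover have "(norm (v + h *\<^sub>R e))\<^sup>2 = (norm v)\<^sup>2 + h * (2 * (v \<bullet> e) + h * (norm e)\<^sup>2)"
    using power2_norm_add[of v "h *\<^sub>R e"] by (simp add: power_mult_distrib power2_eq_square algebra_simps)
  ultimately have "(norm (v + h *\<^sub>R e))\<^sup>2 < (norm v)\<^sup>2" by simp
  then show False using min[OF \<open>0 < h\<close> \<open>h \<le> t\<close>] by (simp add: power_mono leD)
qed

lemma reg_hess2_at_penalized_min: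
  fixes g :: "'a::euclidean_space \<Rightarrow> 'a"
  assumes "\<delta> > 0"
    and min: "\<And>u. u \<in> ball y \<delta> \<Longrightarrow>
      a \<bullet> g y - v \<bullet> y + K * (norm (y - s))\<^sup>2 \<le> a \<bullet> g u - v \<bullet> u + K * (norm (u - s))\<^sup>2"
  shows "v - (2 * K) *\<^sub>R (y - s) \<in> reg_hess2 g y a"
proof (rule reg_hess2_I[OF \<open>\<delta> > 0\<close>])
  fix u assume "u \<in> ball y \<delta>"
  have "(norm (u - s))\<^sup>2 = (norm (u - y))\<^sup>2 + 2 * ((u - y) \<bullet> (y - s)) + (norm (y - s))\<^sup>2"
    using power2_norm_add[of "u - y" "y - s"] by simp
  then have "K * (norm (u - s))\<^sup>2 = K * (norm (u - y))\<^sup>2 + 2 * K * ((u - y) \<bullet> (y - s)) + K * (norm (y - s))\<^sup>2"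
    by (simp add: distrib_left)
  moreover have "(v - (2 * K) *\<^sub>R (y - s)) \<bullet> (u - y) - a \<bullet> (g u - g y)
      = v \<bullet> u - v \<bullet> y - 2 * K * ((u - y) \<bullet> (y - s)) - a \<bullet> g u + a \<bullet> g y"
    by (simp add: inner_diff_left inner_diff_right inner_commute algebra_simps)
  ultimately show "(v - (2 * K) *\<^sub>R (y - s)) \<bullet> (u - y) - a \<bullet> (g u - g y) \<le> K * (norm (u - y))\<^sup>2"
    using min[OF \<open>u \<in> ball y \<delta>\<close>] by linarith
qed

lemma lipschitz_on_penalty_bound:
  fixes G :: "'a::real_normed_vector \<Rightarrow> real"
  assumes "LG-lipschitz_on S G" "u \<in> S" "z \<in> S" "K > 0"
  shows "G z \<le> G u + K * (norm (u - z))\<^sup>2 + LG\<^sup>2 / (4 * K)"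
proof -
  have "G z - G u \<le> LG * norm (u - z)"
    using lipschitz_onD[OF assms(1-3)] by (simp add: dist_norm dist_real_def)
  moreover have "4 * K * (LG * norm (u - z) - K * (norm (u - z))\<^sup>2) \<le> LG\<^sup>2"
    using zero_le_power2[of "2 * K * norm (u - z) - LG"] by (simp add: power2_eq_square algebra_simps)
  then have "LG * norm (u - z) - K * (norm (u - z))\<^sup>2 \<le> LG\<^sup>2 / (4 * K)"
    using \<open>K > 0\<close> by (simp add: le_divide_eq mult.commute)
  ultimately show ?thesis by linarith
qed

lemma ex_pos_mult_bounds:
  fixes a b c d :: real
  assumes "b > 0" "d > 0"
  obtains K where "K > 0" "a \<le> b * K" "c < d * K"
proof -
  define K where "K = \<bar>a\<bar> / b + \<bar>c\<bar> / d + 1"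
  have "0 \<le> \<bar>a\<bar> / b" "0 \<le> \<bar>c\<bar> / d" using assms by auto
  then have "K > 0" "\<bar>a\<bar> / b \<le> K" "\<bar>c\<bar> / d < K" by (auto simp: K_def)
  then show thesis
    using that assms by (auto simp: pos_divide_le_eq pos_divide_less_eq mult.commute abs_le_iff abs_less_iff)
qed

lemma penalized_min_in_ball:
  fixes G :: "'a::real_normed_vector \<Rightarrow> real"
  assumes lip: "LG-lipschitz_on (cball x R) G" and "u \<in> cball x R" "y \<in> cball x R" "s \<in> ball x r"
    and min: "G u + K * (norm (u - s))\<^sup>2 \<le> G y" and K: "K > 0" "2 * R * LG < K * (R - r)\<^sup>2"
    and "r < R"
  shows "u \<in> ball x R"
proof -
  have "G y - G u \<le> LG * dist y u"
    using lipschitz_onD[OF lip \<open>y \<in> cball x R\<close> \<open>u \<in> cball x R\<close>] by (simp add: dist_real_def abs_le_iff)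
  also have "\<dots> \<le> LG * (2 * R)"
    using dist_triangle[of y u x] \<open>y \<in> cball x R\<close> \<open>u \<in> cball x R\<close> lipschitz_on_nonneg[OF lip]
    by (intro mult_left_mono) (auto simp: dist_commute)
  finally have "K * (norm (u - s))\<^sup>2 < K * (R - r)\<^sup>2" using min K(2) by (simp add: mult.commute)
  then have "norm (u - s) < R - r" using K(1) \<open>r < R\<close> by (simp add: power_less_imp_less_base)
  then show ?thesis
    using \<open>s \<in> ball x r\<close> dist_triangle[of x u s] by (simp add: dist_norm norm_minus_commute)
qed

lemma penalized_min_exists:
  fixes G :: "'a::euclidean_space \<Rightarrow> real"
  assumes lip: "LG-lipschitz_on (cball x R) G" and "r < R" "y \<in> ball x r" "z \<in> ball x r"
    and "\<epsilon> > 0" and drop: "G y < G z - \<epsilon>"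
  obtains u t K where "u \<in> ball x R" "0 < t" "t \<le> 1" "K > 0"
    "\<And>v s. v \<in> cball x R \<Longrightarrow> s \<in> {0..1} \<Longrightarrow>
       G u + K * (norm (u - (z + t *\<^sub>R (y - z))))\<^sup>2 \<le> G v + K * (norm (v - (z + s *\<^sub>R (y - z))))\<^sup>2"
proof -
  obtain K where K: "K > 0" "LG\<^sup>2 \<le> (4 * \<epsilon>) * K" "2 * R * LG < (R - r)\<^sup>2 * K"
    using ex_pos_mult_bounds[of "4 * \<epsilon>" "(R - r)\<^sup>2"] \<open>\<epsilon> > 0\<close> \<open>r < R\<close> by auto
  define \<Phi> where "\<Phi> p = G (fst p) + K * (norm (fst p - (z + snd p *\<^sub>R (y - z))))\<^sup>2" for p
  have "continuous_on (cball x R \<times> {0..1}) \<Phi>"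
    unfolding \<Phi>_def
    by (intro continuous_intros continuous_on_compose2[OF lipschitz_on_continuous_on[OF lip]]) auto
  moreover have "y \<in> cball x R" using \<open>y \<in> ball x r\<close> \<open>r < R\<close> by simp
  ultimately obtain u t where ut: "u \<in> cball x R" "t \<in> {0..1}"
    and min: "\<And>v s. v \<in> cball x R \<Longrightarrow> s \<in> {0..1} \<Longrightarrow> \<Phi> (u, t) \<le> \<Phi> (v, s)"
    using continuous_attains_inf[of "cball x R \<times> {0..1}" \<Phi>] by (fastforce simp: compact_Times)
  define \<delta> where "\<delta> = norm (u - (z + t *\<^sub>R (y - z)))"
  have "G u + K * \<delta>\<^sup>2 \<le> G y"
    using min[OF \<open>y \<in> cball x R\<close>, of 1] by (simp add: \<Phi>_def \<delta>_def)
  moreover have "z + t *\<^sub>R (y - z) \<in> ball x r"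
    using add_scaleR_diff_in_ball[OF \<open>y \<in> ball x r\<close> \<open>z \<in> ball x r\<close>] ut(2) by simp
  ultimately have "u \<in> ball x R"
    using penalized_min_in_ball[OF lip ut(1) \<open>y \<in> cball x R\<close>] K \<open>r < R\<close>
    by (simp add: \<delta>_def mult.commute)
  moreover have "t > 0"
  proof (rule ccontr)
    assume "\<not> t > 0"
    then have "\<delta> = norm (u - z)" using ut(2) by (simp add: \<delta>_def)
    then have "G z \<le> G u + K * \<delta>\<^sup>2 + LG\<^sup>2 / (4 * K)"
      using lipschitz_on_penalty_bound[OF lip ut(1) _ K(1), of z] \<open>z \<in> ball x r\<close> \<open>r < R\<close> by simp
    moreover have "LG\<^sup>2 / (4 * K) \<le> \<epsilon>" using K(1,2) by (simp add: divide_le_eq algebra_simps)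
    ultimately show False using \<open>G u + K * \<delta>\<^sup>2 \<le> G y\<close> drop by linarith
  qed
  ultimately show thesis
    using that[of u t K] ut K(1) min by (auto simp: \<Phi>_def)
qed

lemma penalized_min_near_segment:
  fixes G :: "'a::euclidean_space \<Rightarrow> real"
  assumes "LG-lipschitz_on (cball x R) G" "r < R" "y \<in> ball x r" "z \<in> ball x r" "\<epsilon> > 0"
    and "G y < G z - \<epsilon>"
  obtains u s K where "u \<in> ball x R" "K > 0" "0 \<le> (u - s) \<bullet> (y - z)"
    "\<And>v. v \<in> cball x R \<Longrightarrow> G u + K * (norm (u - s))\<^sup>2 \<le> G v + K * (norm (v - s))\<^sup>2"
proof -
  obtain u t K where "u \<in> ball x R" "0 < t" "t \<le> 1" "K > 0"
    and min: "\<And>v s. v \<in> cball x R \<Longrightarrow> s \<in> {0..1} \<Longrightarrow>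
       G u + K * (norm (u - (z + t *\<^sub>R (y - z))))\<^sup>2 \<le> G v + K * (norm (v - (z + s *\<^sub>R (y - z))))\<^sup>2"
    using penalized_min_exists[OF assms] by blast
  define s where "s = z + t *\<^sub>R (y - z)"
  have "0 \<le> (u - s) \<bullet> (y - z)"
  proof (rule inner_nonneg_if_norm_le_add_scaleR[OF \<open>0 < t\<close>])
    fix h assume "0 < h" "h \<le> t"
    then have "K * (norm (u - s))\<^sup>2 \<le> K * (norm (u - (z + (t - h) *\<^sub>R (y - z))))\<^sup>2"
      using min[of u "t - h"] \<open>u \<in> ball x R\<close> \<open>t \<le> 1\<close> by (simp add: s_def)
    also have "u - (z + (t - h) *\<^sub>R (y - z)) = (u - s) + h *\<^sub>R (y - z)"
      by (simp add: s_def algebra_simps)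
    finally show "norm (u - s) \<le> norm ((u - s) + h *\<^sub>R (y - z))"
      using \<open>K > 0\<close> by (simp add: power_mono_iff)
  qed
  then show thesis
    using that[OF \<open>u \<in> ball x R\<close> \<open>K > 0\<close>] min[of _ t] \<open>0 < t\<close> \<open>t \<le> 1\<close> by (simp add: s_def)
qed

(* If the inequality failed for y, z by more than eps, the function G below would drop by eps/2
   from z to y; penalized minimization of G near the segment from z to y then produces a regular
   coderivative element at some u that violates the uniform bound. *)
lemma strongly_monotone_on_if_reg_hess2_pos:
  fixes g :: "'a::euclidean_space \<Rightarrow> 'a"
  assumes lip: "L-lipschitz_on (cball x R) g"
    and pos: "\<And>y a w. y \<in> ball x R \<Longrightarrow> w \<in> reg_hess2 g y a \<Longrightarrow> \<kappa> * (norm a)\<^sup>2 \<le> w \<bullet> a"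
    and "r < R"
  shows "strongly_monotone_on \<kappa> (ball x r) g"
  unfolding strongly_monotone_on_def
proof (intro ballI, rule field_le_epsilon)
  fix y z and \<epsilon> :: real
  assume "y \<in> ball x r" "z \<in> ball x r" "\<epsilon> > 0"
  define e where "e = y - z"
  show "\<kappa> * (norm (y - z))\<^sup>2 \<le> (g y - g z) \<bullet> (y - z) + \<epsilon>"
  proof (rule ccontr)
    assume contra: "\<not> ?thesis"
    then have "e \<noteq> 0" using \<open>\<epsilon> > 0\<close> by (auto simp: e_def)
    define c where "c = \<kappa> - \<epsilon> / (2 * (norm e)\<^sup>2)"
    define G where "G v = e \<bullet> g v - c * (e \<bullet> v)" for v
    have "c * (norm e)\<^sup>2 = \<kappa> * (norm e)\<^sup>2 - \<epsilon> / 2" using \<open>e \<noteq> 0\<close> by (simp add: c_def algebra_simps)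
    then have "G y < G z - \<epsilon> / 2"
      using contra by (simp add: G_def e_def inner_diff_right inner_commute power2_norm_eq_inner algebra_simps)
    moreover obtain LG where "LG-lipschitz_on (cball x R) G"
      unfolding G_def
      using lipschitz_on_diff[OF lipschitz_on_inner_left[OF lip]
          lipschitz_on_cmult_real[OF lipschitz_on_inner_left[OF lipschitz_on_id]]] by blast
    moreover have "\<epsilon> / 2 > 0" using \<open>\<epsilon> > 0\<close> by simp
    ultimately obtain u s K where "u \<in> ball x R" "K > 0" "0 \<le> (u - s) \<bullet> e"
      and min: "\<And>v. v \<in> cball x R \<Longrightarrow> G u + K * (norm (u - s))\<^sup>2 \<le> G v + K * (norm (v - s))\<^sup>2"
      using penalized_min_near_segment[OF _ \<open>r < R\<close> \<open>y \<in> ball x r\<close> \<open>z \<in> ball x r\<close>]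
      unfolding e_def by metis
    have "c *\<^sub>R e - (2 * K) *\<^sub>R (u - s) \<in> reg_hess2 g u e"
    proof (rule reg_hess2_at_penalized_min)
      show "R - dist x u > 0" using \<open>u \<in> ball x R\<close> by simp
      fix v assume "v \<in> ball u (R - dist x u)"
      then have "v \<in> cball x R" using dist_triangle[of x v u] by simp
      then show "e \<bullet> g u - c *\<^sub>R e \<bullet> u + K * (norm (u - s))\<^sup>2 \<le> e \<bullet> g v - c *\<^sub>R e \<bullet> v + K * (norm (v - s))\<^sup>2"
        using min by (simp add: G_def)
    qed
    then have "\<kappa> * (norm e)\<^sup>2 \<le> (c *\<^sub>R e - (2 * K) *\<^sub>R (u - s)) \<bullet> e"
      using pos \<open>u \<in> ball x R\<close> by blast
    also have "\<dots> = c * (norm e)\<^sup>2 - 2 * K * ((u - s) \<bullet> e)"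
      by (simp add: inner_diff_left power2_norm_eq_inner)
    also have "\<dots> \<le> \<kappa> * (norm e)\<^sup>2 - \<epsilon> / 2"
      using \<open>c * (norm e)\<^sup>2 = \<kappa> * (norm e)\<^sup>2 - \<epsilon> / 2\<close> \<open>K > 0\<close> \<open>0 \<le> (u - s) \<bullet> e\<close> by simp
    finally show False using \<open>\<epsilon> > 0\<close> by simp
  qed
qed

definition hess2_posdef_on :: "real \<Rightarrow> 'a::euclidean_space set \<Rightarrow> ('a \<Rightarrow> 'a) \<Rightarrow> bool" where
  "hess2_posdef_on \<kappa> S g \<longleftrightarrow> (\<forall>y\<in>S. \<forall>a z. z \<in> hess2 g y a \<longrightarrow> \<kappa> * (norm a)\<^sup>2 \<le> z \<bullet> a)"

lemma hess2_posdef_local_structure: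
  fixes g :: "'a::euclidean_space \<Rightarrow> 'a"
  assumes "loc_lipschitz g" "hess2_posdef g x"
  obtains r \<kappa> L where "r > 0" "\<kappa> > 0" "L-lipschitz_on (ball x r) g" "strongly_monotone_on \<kappa> (ball x r) g"
    "hess2_posdef_on \<kappa> (ball x r) g"
proof -
  obtain r0 L where "r0 > 0" and lip: "L-lipschitz_on (ball x r0) g"
    using loc_lipschitzE[OF assms(1)] .
  obtain \<rho> \<kappa> where "\<rho> > 0" "\<kappa> > 0"
    and pos: "\<And>y a w. y \<in> ball x \<rho> \<Longrightarrow> w \<in> reg_hess2 g y a \<Longrightarrow> \<kappa> * (norm a)\<^sup>2 \<le> w \<bullet> a"
    using reg_hess2_uniformly_pos[OF lip \<open>r0 > 0\<close> assms(2)] by blast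
  define R where "R = min \<rho> r0 / 2"
  have "R > 0" "cball x R \<subseteq> ball x r0" "ball x R \<subseteq> ball x \<rho>"
    using \<open>\<rho> > 0\<close> \<open>r0 > 0\<close> by (auto simp: R_def)
  have posR: "\<kappa> * (norm a)\<^sup>2 \<le> w \<bullet> a" if "y \<in> ball x R" "w \<in> reg_hess2 g y a" for y a w
    using pos that \<open>ball x R \<subseteq> ball x \<rho>\<close> by blast
  show thesis
  proof (rule that[of "R / 2" \<kappa> L])
    show "R / 2 > 0" "\<kappa> > 0" using \<open>R > 0\<close> \<open>\<kappa> > 0\<close> by auto
    show "L-lipschitz_on (ball x (R / 2)) g"
      using \<open>cball x R \<subseteq> ball x r0\<close> \<open>R > 0\<close> by (intro lipschitz_on_subset[OF lip]) auto
    show "strongly_monotone_on \<kappa> (ball x (R / 2)) g"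
      using strongly_monotone_on_if_reg_hess2_pos[OF lipschitz_on_subset[OF lip] posR]
        \<open>cball x R \<subseteq> ball x r0\<close> \<open>R > 0\<close> by simp
    show "hess2_posdef_on \<kappa> (ball x (R / 2)) g"
      unfolding hess2_posdef_on_def
    proof (intro ballI allI impI)
      fix y a z assume y: "y \<in> ball x (R / 2)" and z: "z \<in> hess2 g y a"
      show "\<kappa> * (norm a)\<^sup>2 \<le> z \<bullet> a"
      proof (rule hess2_inner_ge[OF open_ball _ z])
        show "y \<in> ball x R" using y zero_le_dist[of x y] unfolding mem_ball by linarith
      qed (rule posR)
    qed
  qed
qed

section \<open>Solvability of the Newton equation\<close>

lemma strongly_monotone_on_norm_le:
  assumes "strongly_monotone_on \<kappa> S g" "y \<in> S" "z \<in> S"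
  shows "\<kappa> * norm (y - z) \<le> norm (g y - g z)"
proof (cases "y = z")
  case False
  have "\<kappa> * (norm (y - z))\<^sup>2 \<le> (g y - g z) \<bullet> (y - z)"
    using assms unfolding strongly_monotone_on_def by blast
  also have "\<dots> \<le> norm (g y - g z) * norm (y - z)" by (rule norm_cauchy_schwarz)
  finally show ?thesis using False by (simp add: power2_eq_square)
qed simp

lemma reg_hess2_at_penalized_min_range:
  fixes g :: "'a::euclidean_space \<Rightarrow> 'a"
  assumes "\<delta> > 0" "L-lipschitz_on (ball y \<delta>) g" "K \<ge> 0"
    and min: "\<And>u. u \<in> ball y \<delta> \<Longrightarrow> K * (norm (g y - c))\<^sup>2 - w \<bullet> y \<le> K * (norm (g u - c))\<^sup>2 - w \<bullet> u"
  shows "w \<in> reg_hess2 g y ((2 * K) *\<^sub>R (g y - c))"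
proof (rule reg_hess2_I[OF \<open>\<delta> > 0\<close>])
  fix u assume "u \<in> ball y \<delta>"
  have "(norm (g u - c))\<^sup>2 = (norm (g u - g y))\<^sup>2 + 2 * ((g u - g y) \<bullet> (g y - c)) + (norm (g y - c))\<^sup>2"
    using power2_norm_add[of "g u - g y" "g y - c"] by simp
  then have "K * (norm (g u - c))\<^sup>2
      = K * (norm (g u - g y))\<^sup>2 + (2 * K) *\<^sub>R (g y - c) \<bullet> (g u - g y) + K * (norm (g y - c))\<^sup>2"
    by (simp add: distrib_left inner_commute)
  moreover have "w \<bullet> (u - y) = w \<bullet> u - w \<bullet> y" by (simp add: inner_diff_right)
  ultimately have "w \<bullet> (u - y) - (2 * K) *\<^sub>R (g y - c) \<bullet> (g u - g y) \<le> K * (norm (g u - g y))\<^sup>2"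
    using min[OF \<open>u \<in> ball y \<delta>\<close>] by linarith
  also have "\<dots> \<le> K * (L * norm (u - y))\<^sup>2"
    using lipschitz_on_normD[OF assms(2) \<open>u \<in> ball y \<delta>\<close>, of y] \<open>\<delta> > 0\<close> \<open>K \<ge> 0\<close>
    by (intro mult_left_mono power_mono) auto
  finally show "w \<bullet> (u - y) - (2 * K) *\<^sub>R (g y - c) \<bullet> (g u - g y) \<le> (K * L\<^sup>2) * (norm (u - y))\<^sup>2"
    by (simp add: power_mult_distrib)
qed

lemma penalized_min_range_bounds:
  assumes mono: "strongly_monotone_on \<kappa> S g" and "x \<in> S" "y \<in> S" "\<kappa> > 0" "K > 0"
    and le: "K * (norm (g y - g x))\<^sup>2 \<le> w \<bullet> (y - x)"
  shows "norm (g y - g x) \<le> norm w / (\<kappa> * K)" "norm (y - x) \<le> norm w / (\<kappa>\<^sup>2 * K)"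
proof -
  have low: "\<kappa> * norm (y - x) \<le> norm (g y - g x)"
    by (rule strongly_monotone_on_norm_le[OF mono \<open>y \<in> S\<close> \<open>x \<in> S\<close>])
  have "K * norm (g y - g x) * norm (g y - g x) \<le> norm w * norm (y - x)"
    using le norm_cauchy_schwarz[of w "y - x"] by (simp add: power2_eq_square mult.assoc)
  also have "\<dots> \<le> norm w / \<kappa> * norm (g y - g x)"
    using mult_left_mono[OF low, of "norm w"] \<open>\<kappa> > 0\<close> by (simp add: field_simps)
  finally have *: "K * norm (g y - g x) * norm (g y - g x) \<le> norm w / \<kappa> * norm (g y - g x)" .
  have "K * norm (g y - g x) \<le> norm w / \<kappa>"
  proof (cases "g y = g x")
    case False
    then show ?thesis using mult_right_le_imp_le[OF *] by simp
  qed (use \<open>\<kappa> > 0\<close> in simp)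
  then show gb: "norm (g y - g x) \<le> norm w / (\<kappa> * K)"
    using \<open>K > 0\<close> \<open>\<kappa> > 0\<close> by (simp add: field_simps)
  have "norm (y - x) \<le> norm (g y - g x) / \<kappa>" using low \<open>\<kappa> > 0\<close> by (simp add: field_simps)
  also have "\<dots> \<le> norm w / (\<kappa> * K) / \<kappa>" using divide_right_mono[OF gb, of \<kappa>] \<open>\<kappa> > 0\<close> by simp
  also have "\<dots> = norm w / (\<kappa>\<^sup>2 * K)" by (simp add: power2_eq_square mult.commute)
  finally show "norm (y - x) \<le> norm w / (\<kappa>\<^sup>2 * K)" .
qed

lemma penalized_min_in_range:
  fixes g :: "'a::euclidean_space \<Rightarrow> 'a"
  assumes lip: "L-lipschitz_on (ball x r) g" and mono: "strongly_monotone_on \<kappa> (ball x r) g"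
    and "\<kappa> > 0" "0 < \<rho>" "\<rho> < r" "K > 0" and small: "norm w < \<kappa>\<^sup>2 * K * \<rho>"
  obtains y where "norm (y - x) \<le> norm w / (\<kappa>\<^sup>2 * K)" "norm (g y - g x) \<le> norm w / (\<kappa> * K)"
    "w \<in> reg_hess2 g y ((2 * K) *\<^sub>R (g y - g x))"
proof -
  define \<psi> where "\<psi> u = K * (norm (g u - g x))\<^sup>2 - w \<bullet> u" for u
  have "cball x \<rho> \<subseteq> ball x r" "x \<in> ball x r" using \<open>0 < \<rho>\<close> \<open>\<rho> < r\<close> by auto
  then have "continuous_on (cball x \<rho>) \<psi>"
    unfolding \<psi>_def by (intro continuous_intros continuous_on_subset[OF lipschitz_on_continuous_on[OF lip]])
  then obtain y where "y \<in> cball x \<rho>" and min: "\<And>u. u \<in> cball x \<rho> \<Longrightarrow> \<psi> y \<le> \<psi> u"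
    using continuous_attains_inf[OF compact_cball _ \<open>continuous_on (cball x \<rho>) \<psi>\<close>] \<open>0 < \<rho>\<close> by auto
  then have "y \<in> ball x r" using \<open>cball x \<rho> \<subseteq> ball x r\<close> by blast
  have "K * (norm (g y - g x))\<^sup>2 \<le> w \<bullet> (y - x)"
    using min[of x] \<open>0 < \<rho>\<close> by (simp add: \<psi>_def inner_diff_right)
  note bounds = penalized_min_range_bounds[OF mono \<open>x \<in> ball x r\<close> \<open>y \<in> ball x r\<close> \<open>\<kappa> > 0\<close> \<open>K > 0\<close> this]
  have "norm w / (\<kappa>\<^sup>2 * K) < \<rho>" using small \<open>K > 0\<close> \<open>\<kappa> > 0\<close> by (simp add: divide_less_eq mult.commute)
  then have "dist y x < \<rho>" using bounds(2) by (simp add: dist_norm)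
  have "ball y (\<rho> - dist y x) \<subseteq> ball x \<rho>" by (subst ball_subset_ball_iff) simp
  then have "ball y (\<rho> - dist y x) \<subseteq> cball x \<rho>" by auto
  then have "w \<in> reg_hess2 g y ((2 * K) *\<^sub>R (g y - g x))"
    using \<open>dist y x < \<rho>\<close> \<open>cball x \<rho> \<subseteq> ball x r\<close> \<open>K > 0\<close> min
    by (intro reg_hess2_at_penalized_min_range[where \<delta> = "\<rho> - dist y x", OF _ lipschitz_on_subset[OF lip]])
       (auto simp: \<psi>_def)
  then show thesis using that bounds by blast
qed

(* Minimizers of K |g u - g x|^2 - <w, u> for K \<rightarrow> \<infinity> give w as a regular coderivative element at
   points converging to x, along bounded directions; a limit direction d gives w \<in> hess2 g x d. *)
lemma hess2_surjective:
  fixes g :: "'a::euclidean_space \<Rightarrow> 'a"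
  assumes lip: "L-lipschitz_on (ball x r) g" and mono: "strongly_monotone_on \<kappa> (ball x r) g"
    and "\<kappa> > 0" "r > 0"
  shows "\<exists>d. w \<in> hess2 g x d"
proof -
  define K where "K k = norm w / (\<kappa>\<^sup>2 * (r / 2)) + 1 + real k" for k
  have "0 \<le> norm w / (\<kappa>\<^sup>2 * (r / 2))" using \<open>\<kappa> > 0\<close> \<open>r > 0\<close> by simp
  then have K: "K k > 0" "norm w / (\<kappa>\<^sup>2 * (r / 2)) < K k" "1 + real k \<le> K k" for k
    by (auto simp: K_def)
  have K2: "norm w < \<kappa>\<^sup>2 * K k * (r / 2)" for k
    using K(2)[of k] \<open>\<kappa> > 0\<close> \<open>r > 0\<close> by (simp add: pos_divide_less_eq algebra_simps)
  have "r / 2 > 0" "r / 2 < r" using \<open>r > 0\<close> by simp_all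
  have "\<exists>y. norm (y - x) \<le> norm w / (\<kappa>\<^sup>2 * K k) \<and> norm (g y - g x) \<le> norm w / (\<kappa> * K k)
          \<and> w \<in> reg_hess2 g y ((2 * K k) *\<^sub>R (g y - g x))" for k
    using penalized_min_in_range[OF lip mono \<open>\<kappa> > 0\<close> \<open>r / 2 > 0\<close> \<open>r / 2 < r\<close> K(1) K2] by blast
  then obtain Y where Yx: "\<And>k. norm (Y k - x) \<le> norm w / (\<kappa>\<^sup>2 * K k)"
    and gY: "\<And>k. norm (g (Y k) - g x) \<le> norm w / (\<kappa> * K k)"
    and W: "\<And>k. w \<in> reg_hess2 g (Y k) ((2 * K k) *\<^sub>R (g (Y k) - g x))"
    by metis
  have Ybound: "norm (Y k - x) \<le> norm w / \<kappa>\<^sup>2 * inverse (real (Suc k))" for k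
  proof -
    have "norm w / (\<kappa>\<^sup>2 * K k) \<le> norm w / (\<kappa>\<^sup>2 * (1 + real k))"
      using K(3)[of k] \<open>\<kappa> > 0\<close> by (intro divide_left_mono mult_left_mono mult_pos_pos) auto
    then show ?thesis using Yx[of k] by (simp add: field_simps)
  qed
  have "Y \<longlonglongrightarrow> x"
    using Lim_null_comparison[OF always_eventually[OF allI[OF Ybound]]
        tendsto_mult_right_zero[OF LIMSEQ_inverse_real_of_nat]]
    by (rule LIM_zero_cancel)
  have "norm ((2 * K k) *\<^sub>R (g (Y k) - g x)) \<le> 2 * norm w / \<kappa>" for k
    using mult_left_mono[OF gY[of k], of "2 * K k"] K(1)[of k] \<open>\<kappa> > 0\<close> by simp
  then have bq: "bounded (range (\<lambda>k. (2 * K k) *\<^sub>R (g (Y k) - g x)))"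
    by (auto simp: bounded_iff)
  have bw: "bounded (range (\<lambda>_::nat. w))" by simp
  have "isCont g x"
    using continuous_on_interior[OF lipschitz_on_continuous_on[OF lip]] \<open>r > 0\<close> by simp
  obtain s z u where "strict_mono s" "((\<lambda>_. w) \<circ> s) \<longlonglongrightarrow> z"
    "((\<lambda>k. (2 * K k) *\<^sub>R (g (Y k) - g x)) \<circ> s) \<longlonglongrightarrow> u" "z \<in> hess2 g x u"
    by (rule hess2_subseq_limit[OF \<open>isCont g x\<close> \<open>Y \<longlonglongrightarrow> x\<close> W bw bq])
  moreover have "((\<lambda>_. w) \<circ> s) \<longlonglongrightarrow> w" by (simp add: o_def)
  ultimately show ?thesis using LIMSEQ_unique by blast
qed

lemma hess2_posdef_surjective:
  fixes g :: "'a::euclidean_space \<Rightarrow> 'a"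
  assumes "loc_lipschitz g" "hess2_posdef g x"
  shows "\<exists>d. w \<in> hess2 g x d"
proof -
  obtain r \<kappa> L where "r > 0" "\<kappa> > 0" "L-lipschitz_on (ball x r) g" "strongly_monotone_on \<kappa> (ball x r) g"
    using hess2_posdef_local_structure[OF assms] by blast
  then show ?thesis using hess2_surjective by blast
qed

lemma newton_direction_descent:
  fixes g :: "'a::euclidean_space \<Rightarrow> 'a"
  assumes "loc_lipschitz g" "hess2_posdef g x" "g x \<noteq> 0" "- g x \<in> hess2 g x d"
  shows "g x \<bullet> d < 0"
proof -
  obtain r L where "r > 0" "L-lipschitz_on (ball x r) g" using loc_lipschitzE[OF assms(1)] .
  then have "norm (g x) \<le> L * norm d" using hess2_norm_le[OF _ open_ball _ assms(4)] by simp
  then have "d \<noteq> 0" using \<open>g x \<noteq> 0\<close> by auto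
  then show ?thesis using assms(2,4) unfolding hess2_posdef_def by force
qed

section \<open>Tilt stability\<close>

lemma has_real_derivative_along_line:
  assumes grad: "\<And>x. (phi has_derivative (\<lambda>h. g x \<bullet> h)) (at x)"
  shows "((\<lambda>t. phi (x + t *\<^sub>R d)) has_real_derivative g (x + t *\<^sub>R d) \<bullet> d) (at t)"
proof -
  have "((\<lambda>t. x + t *\<^sub>R d) has_derivative (\<lambda>s. s *\<^sub>R d)) (at t)"
    by (auto intro!: derivative_eq_intros)
  from has_derivative_compose[OF this grad]
  show ?thesis by (rule has_derivative_imp_has_field_derivative) simp
qed

lemma strongly_monotone_on_imp_strongly_convex:
  fixes phi :: "'a::real_inner \<Rightarrow> real"
  assumes grad: "\<And>x. (phi has_derivative (\<lambda>h. g x \<bullet> h)) (at x)"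
    and mono: "strongly_monotone_on \<kappa> (ball p r) g" and "y \<in> ball p r" "z \<in> ball p r"
  shows "phi z + g z \<bullet> (y - z) + \<kappa> / 2 * (norm (y - z))\<^sup>2 \<le> phi y"
proof -
  define e where "e = y - z"
  define \<theta> where "\<theta> t = phi (z + t *\<^sub>R e) - t * (g z \<bullet> e) - \<kappa> / 2 * t\<^sup>2 * (norm e)\<^sup>2" for t
  define \<theta>' where "\<theta>' t = g (z + t *\<^sub>R e) \<bullet> e - g z \<bullet> e - \<kappa> * t * (norm e)\<^sup>2" for t
  have "(\<theta> has_real_derivative \<theta>' t) (at t)" for t
    unfolding \<theta>_def \<theta>'_def
    by (rule derivative_eq_intros has_real_derivative_along_line[OF grad] refl)+
       (simp add: power2_eq_square algebra_simps)
  then obtain t where t: "0 < t" "t < 1" "\<theta> 1 - \<theta> 0 = \<theta>' t"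
    using MVT2[of 0 1 \<theta> \<theta>'] by auto
  have "z + t *\<^sub>R e \<in> ball p r"
    using add_scaleR_diff_in_ball[OF assms(3,4)] t by (simp add: e_def)
  then have "\<kappa> * (norm (t *\<^sub>R e))\<^sup>2 \<le> (g (z + t *\<^sub>R e) - g z) \<bullet> (t *\<^sub>R e)"
    using mono \<open>z \<in> ball p r\<close> unfolding strongly_monotone_on_def by (metis add_diff_cancel_left')
  then have "t * (\<kappa> * t * (norm e)\<^sup>2) \<le> t * ((g (z + t *\<^sub>R e) - g z) \<bullet> e)"
    using t by (simp add: power2_eq_square algebra_simps)
  then have "\<theta>' t \<ge> 0" using t by (simp add: \<theta>'_def inner_diff_left)
  then show ?thesis using t by (simp add: \<theta>_def e_def)
qed

lemma M_tilt_mem_imp_grad_eq: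
  fixes phi :: "'a::euclidean_space \<Rightarrow> real"
  assumes grad: "\<And>x. (phi has_derivative (\<lambda>h. g x \<bullet> h)) (at x)"
    and mono: "strongly_monotone_on \<kappa> (ball p r) g" and "\<kappa> > 0" "\<gamma> < r" "g p = 0"
    and v: "norm v < \<kappa> * \<gamma> / 2" and m: "m \<in> M_tilt phi p \<gamma> v"
  shows "m \<in> ball p \<gamma>" "g m = v"
proof -
  have m_min: "\<And>y. y \<in> cball p \<gamma> \<Longrightarrow> phi m - v \<bullet> m \<le> phi y - v \<bullet> y" and "m \<in> cball p \<gamma>"
    using m by (auto simp: M_tilt_def)
  then have "\<gamma> \<ge> 0" using zero_le_dist[of p m] by (simp add: dist_commute del: zero_le_dist)
  have "phi p + \<kappa> / 2 * (norm (m - p))\<^sup>2 \<le> phi m"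
    using strongly_monotone_on_imp_strongly_convex[OF grad mono, of m p] \<open>m \<in> cball p \<gamma>\<close> \<open>\<gamma> \<ge> 0\<close> \<open>\<gamma> < r\<close> \<open>g p = 0\<close>
    by (simp add: dist_commute)
  moreover have "phi m - v \<bullet> m \<le> phi p - v \<bullet> p" using m_min \<open>\<gamma> \<ge> 0\<close> by simp
  ultimately have "\<kappa> / 2 * norm (m - p) * norm (m - p) \<le> norm v * norm (m - p)"
    using norm_cauchy_schwarz[of v "m - p"] by (simp add: inner_diff_right power2_eq_square)
  then have "\<kappa> / 2 * norm (m - p) \<le> norm v"
    by (cases "m = p") (auto dest: mult_right_le_imp_le)
  then have "\<kappa> * norm (m - p) < \<kappa> * \<gamma>" using v by simp
  then show "m \<in> ball p \<gamma>" using \<open>\<kappa> > 0\<close> by (simp add: dist_norm norm_minus_commute)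
  have "((\<lambda>x. phi x - v \<bullet> x) has_derivative (\<lambda>h. g m \<bullet> h - v \<bullet> h)) (at m)"
    using grad by (auto intro!: derivative_eq_intros)
  moreover have "eventually (\<lambda>y. phi m - v \<bullet> m \<le> phi y - v \<bullet> y) (at m)"
    using eventually_at_in_open'[OF open_ball \<open>m \<in> ball p \<gamma>\<close>]
    by eventually_elim (use m_min in auto)
  ultimately have "(\<lambda>h. g m \<bullet> h - v \<bullet> h) = (\<lambda>h. 0)" by (rule has_derivative_local_min)
  then have "(g m - v) \<bullet> (g m - v) = 0" by (metis inner_diff_left)
  then show "g m = v" by simp
qed

lemma M_tilt_nonempty:
  assumes "continuous_on (cball p \<gamma>) phi" "\<gamma> \<ge> 0"
  shows "M_tilt phi p \<gamma> v \<noteq> {}"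
proof -
  have cont: "continuous_on (cball p \<gamma>) (\<lambda>x. phi x - v \<bullet> x)"
    by (intro continuous_intros assms(1))
  obtain m where "m \<in> cball p \<gamma>" "\<forall>y\<in>cball p \<gamma>. phi m - v \<bullet> m \<le> phi y - v \<bullet> y"
    using continuous_attains_inf[OF compact_cball _ cont] \<open>\<gamma> \<ge> 0\<close> by auto
  then show ?thesis unfolding M_tilt_def by blast
qed

lemma strongly_monotone_on_inj_on:
  assumes "strongly_monotone_on \<kappa> S g" "\<kappa> > 0"
  shows "inj_on g S"
proof (rule inj_onI)
  fix y z assume "y \<in> S" "z \<in> S" "g y = g z"
  then have "\<kappa> * norm (y - z) \<le> 0" using strongly_monotone_on_norm_le[OF assms(1), of y z] by simp
  then show "y = z" using \<open>\<kappa> > 0\<close> by (simp add: mult_le_0_iff)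
qed

lemma M_tilt_singleton:
  fixes phi :: "'a::euclidean_space \<Rightarrow> real"
  assumes grad: "\<And>x. (phi has_derivative (\<lambda>h. g x \<bullet> h)) (at x)"
    and mono: "strongly_monotone_on \<kappa> (ball p r) g" and "\<kappa> > 0" "0 < \<gamma>" "\<gamma> < r" "g p = 0"
    and "norm v < \<kappa> * \<gamma> / 2"
  obtains m where "M_tilt phi p \<gamma> v = {m}" "m \<in> ball p \<gamma>" "g m = v"
proof -
  note M = M_tilt_mem_imp_grad_eq[OF grad mono \<open>\<kappa> > 0\<close> \<open>\<gamma> < r\<close> \<open>g p = 0\<close> \<open>norm v < \<kappa> * \<gamma> / 2\<close>]
  have "continuous_on (cball p \<gamma>) phi"
    by (intro continuous_at_imp_continuous_on ballI has_derivative_continuous[OF grad])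
  then obtain m where "m \<in> M_tilt phi p \<gamma> v"
    using M_tilt_nonempty[OF _ less_imp_le[OF \<open>0 < \<gamma>\<close>]] by blast
  moreover have "inj_on g (ball p \<gamma>)"
    using \<open>\<gamma> < r\<close> by (intro inj_on_subset[OF strongly_monotone_on_inj_on[OF mono \<open>\<kappa> > 0\<close>]]) auto
  then have "m' = m" if "m' \<in> M_tilt phi p \<gamma> v" for m'
    by (rule inj_onD) (use M[OF that] M[OF \<open>m \<in> M_tilt phi p \<gamma> v\<close>] in auto)
  ultimately show thesis using that M by blast
qed

lemma tilt_stable_if_strongly_monotone_on:
  fixes phi :: "'a::euclidean_space \<Rightarrow> real"
  assumes grad: "\<And>x. (phi has_derivative (\<lambda>h. g x \<bullet> h)) (at x)"
    and "r > 0" "\<kappa> > 0" and mono: "strongly_monotone_on \<kappa> (ball p r) g" and "g p = 0"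
  shows "tilt_stable phi p"
proof -
  define \<gamma> where "\<gamma> = r / 2"
  have "0 < \<gamma>" "\<gamma> < r" using \<open>r > 0\<close> by (auto simp: \<gamma>_def)
  have "\<forall>v\<in>ball 0 (\<kappa> * \<gamma> / 2). \<exists>m. M_tilt phi p \<gamma> v = {m} \<and> m \<in> ball p \<gamma> \<and> g m = v"
  proof
    fix v :: 'a assume "v \<in> ball 0 (\<kappa> * \<gamma> / 2)"
    then have "norm v < \<kappa> * \<gamma> / 2" by simp
    then obtain m where "M_tilt phi p \<gamma> v = {m}" "m \<in> ball p \<gamma>" "g m = v"
      by (rule M_tilt_singleton[OF grad mono \<open>\<kappa> > 0\<close> \<open>0 < \<gamma>\<close> \<open>\<gamma> < r\<close> \<open>g p = 0\<close>])
    then show "\<exists>m. M_tilt phi p \<gamma> v = {m} \<and> m \<in> ball p \<gamma> \<and> g m = v" by blast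
  qed
  then obtain m where m: "\<And>v. v \<in> ball 0 (\<kappa> * \<gamma> / 2) \<Longrightarrow> M_tilt phi p \<gamma> v = {m v} \<and> m v \<in> ball p \<gamma> \<and> g (m v) = v"
    by (metis bchoice)
  have mv: "m v \<in> ball p r" "g (m v) = v" if "v \<in> ball 0 (\<kappa> * \<gamma> / 2)" for v
    using m[OF that] \<open>\<gamma> < r\<close> by auto
  show ?thesis
    unfolding tilt_stable_def
  proof (intro exI conjI ballI)
    show "\<gamma> > 0" "\<kappa> * \<gamma> / 2 > 0" using \<open>0 < \<gamma>\<close> \<open>\<kappa> > 0\<close> by auto
    show "M_tilt phi p \<gamma> v = {m v}" if "v \<in> ball 0 (\<kappa> * \<gamma> / 2)" for v using m[OF that] by blast
    fix v w :: 'a assume v: "v \<in> ball 0 (\<kappa> * \<gamma> / 2)" and w: "w \<in> ball 0 (\<kappa> * \<gamma> / 2)"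
    have "\<kappa> * norm (m v - m w) \<le> norm (v - w)"
      using strongly_monotone_on_norm_le[OF mono mv(1)[OF v] mv(1)[OF w]] mv(2)[OF v] mv(2)[OF w] by simp
    then show "norm (m v - m w) \<le> 1 / \<kappa> * norm (v - w)" using \<open>\<kappa> > 0\<close> by (simp add: field_simps)
  next
    have "0 \<in> ball 0 (\<kappa> * \<gamma> / 2)" using \<open>0 < \<gamma>\<close> \<open>\<kappa> > 0\<close> by simp
    moreover have "p \<in> ball p r" using \<open>r > 0\<close> by simp
    moreover have "g (m 0) = g p" using mv(2)[OF \<open>0 \<in> ball 0 (\<kappa> * \<gamma> / 2)\<close>] \<open>g p = 0\<close> by simp
    ultimately have "m 0 = p"
      using inj_onD[OF strongly_monotone_on_inj_on[OF mono \<open>\<kappa> > 0\<close>]] mv(1) by blast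
    then show "M_tilt phi p \<gamma> 0 = {p}" using m \<open>0 \<in> ball 0 (\<kappa> * \<gamma> / 2)\<close> by auto
  qed
qed

section \<open>Backtracking line search\<close>

lemma armijo_exists:
  fixes phi :: "'a::euclidean_space \<Rightarrow> real"
  assumes grad: "\<And>x. (phi has_derivative (\<lambda>h. g x \<bullet> h)) (at x)"
    and "\<sigma> < 1" "0 < \<beta>" "\<beta> < 1" and descent: "g x \<bullet> d < 0"
  shows "\<exists>j. armijo phi g \<sigma> \<beta> x d j"
proof -
  define F where "F t = phi (x + t *\<^sub>R d)" for t
  have "(F has_real_derivative g x \<bullet> d) (at 0)"
    using has_real_derivative_along_line[OF grad, of x d 0] by (simp add: F_def[abs_def])
  then have Q: "((\<lambda>h. (F (0 + h) - F 0) / h) \<longlongrightarrow> g x \<bullet> d) (at 0)" by (simp add: DERIV_def)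
  have "filterlim (\<lambda>j. \<beta> ^ j) (at 0) sequentially"
    using \<open>0 < \<beta>\<close> \<open>\<beta> < 1\<close> by (intro filterlim_atI LIMSEQ_power_zero) auto
  from filterlim_compose[OF Q this]
  have "((\<lambda>j. (F (\<beta> ^ j) - F 0) / \<beta> ^ j) \<longlongrightarrow> g x \<bullet> d) sequentially" by simp
  moreover have "g x \<bullet> d < \<sigma> * (g x \<bullet> d)" using descent \<open>\<sigma> < 1\<close> by simp
  ultimately have "eventually (\<lambda>j. (F (\<beta> ^ j) - F 0) / \<beta> ^ j < \<sigma> * (g x \<bullet> d)) sequentially"
    by (rule order_tendstoD(2))
  then obtain j where "(F (\<beta> ^ j) - F 0) / \<beta> ^ j < \<sigma> * (g x \<bullet> d)"
    by (auto simp: eventually_sequentially)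
  then have "armijo phi g \<sigma> \<beta> x d j"
    using \<open>0 < \<beta>\<close> by (simp add: armijo_def F_def divide_less_eq algebra_simps)
  then show ?thesis by blast
qed

lemma quadratic_upper_bound:
  fixes phi :: "'a::euclidean_space \<Rightarrow> real"
  assumes grad: "\<And>x. (phi has_derivative (\<lambda>h. g x \<bullet> h)) (at x)"
    and lip: "L-lipschitz_on (ball c r) g" and "x \<in> ball c r" "x + d \<in> ball c r"
  shows "phi (x + d) \<le> phi x + g x \<bullet> d + L * (norm d)\<^sup>2"
proof -
  obtain t :: real where t: "0 < t" "t < 1" "phi (x + d) - phi x = g (x + t *\<^sub>R d) \<bullet> d"
    using MVT2[of 0 1 "\<lambda>t. phi (x + t *\<^sub>R d)"] has_real_derivative_along_line[OF grad] by force
  have "x + t *\<^sub>R d \<in> ball c r"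
    using add_scaleR_diff_in_ball[OF assms(4,3)] t by simp
  then have "(g (x + t *\<^sub>R d) - g x) \<bullet> d \<le> L * norm (t *\<^sub>R d) * norm d"
    using norm_cauchy_schwarz[of "g (x + t *\<^sub>R d) - g x" d] lipschitz_on_normD[OF lip _ \<open>x \<in> ball c r\<close>]
      lipschitz_on_nonneg[OF lip] by (smt (verit) add_diff_cancel_left' mult_right_mono norm_ge_zero)
  also have "\<dots> \<le> L * (norm d)\<^sup>2"
    using t lipschitz_on_nonneg[OF lip]
    by (simp add: power2_eq_square mult_left_le_one_le mult_right_mono mult.assoc mult_left_mono)
  finally show ?thesis using t(3) by (simp add: inner_diff_left)
qed

lemma armijo_if_small_step:
  fixes phi :: "'a::euclidean_space \<Rightarrow> real"
  assumes grad: "\<And>x. (phi has_derivative (\<lambda>h. g x \<bullet> h)) (at x)"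
    and lip: "L-lipschitz_on (ball c r) g" and "x \<in> ball c r" "x + \<beta> ^ j *\<^sub>R d \<in> ball c r"
    and descent: "g x \<bullet> d \<le> - \<kappa> * (norm d)\<^sup>2" and small: "L * \<beta> ^ j \<le> (1 - \<sigma>) * \<kappa>"
    and "\<sigma> \<le> 1" "\<beta> > 0"
  shows "armijo phi g \<sigma> \<beta> x d j"
proof -
  define t where "t = \<beta> ^ j"
  have "t > 0" using \<open>\<beta> > 0\<close> by (simp add: t_def)
  have "(L * t) * (t * (norm d)\<^sup>2) \<le> ((1 - \<sigma>) * \<kappa>) * (t * (norm d)\<^sup>2)"
    using small \<open>t > 0\<close> by (intro mult_right_mono) (auto simp: t_def)
  moreover have "(1 - \<sigma>) * t * (g x \<bullet> d) \<le> (1 - \<sigma>) * t * (- \<kappa> * (norm d)\<^sup>2)"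
    using descent \<open>\<sigma> \<le> 1\<close> \<open>t > 0\<close> by (intro mult_left_mono) auto
  ultimately have "t * (g x \<bullet> d) + L * (norm (t *\<^sub>R d))\<^sup>2 \<le> \<sigma> * t * (g x \<bullet> d)"
    using \<open>t > 0\<close> by (simp add: power2_eq_square algebra_simps)
  then show ?thesis
    using quadratic_upper_bound[OF grad lip \<open>x \<in> ball c r\<close>, of "t *\<^sub>R d"] assms(4)
    by (simp add: armijo_def t_def)
qed

lemma power_Least_ge:
  fixes \<beta> T :: real
  assumes "\<exists>j. P j" "0 < \<beta>" "\<beta> < 1" and small: "\<And>j. \<beta> ^ j \<le> T \<Longrightarrow> P j"
  shows "min 1 (\<beta> * T) \<le> \<beta> ^ (LEAST j. P j)"
proof (cases "(LEAST j. P j) = 0")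
  case False
  then obtain i where i: "(LEAST j. P j) = Suc i" using not0_implies_Suc by blast
  then have "\<not> P i" using not_less_Least[of i P] by simp
  then have "T < \<beta> ^ i" using small by force
  then have "\<beta> * T \<le> \<beta> ^ Suc i" using \<open>0 < \<beta>\<close> by simp
  then show ?thesis using i by simp
qed simp

lemma newton_direction_bounds:
  fixes g :: "'a::euclidean_space \<Rightarrow> 'a"
  assumes lip: "L-lipschitz_on S g" "open S" "y \<in> S"
    and "hess2_posdef_on \<kappa> S g" and d: "- g y \<in> hess2 g y d"
  shows "g y \<bullet> d \<le> - \<kappa> * (norm d)\<^sup>2" "norm (g y) \<le> L * norm d" "\<kappa> * norm d \<le> norm (g y)"
proof -
  have pos: "\<kappa> * (norm d)\<^sup>2 \<le> - g y \<bullet> d"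
    using \<open>hess2_posdef_on \<kappa> S g\<close> \<open>y \<in> S\<close> d unfolding hess2_posdef_on_def by fastforce
  then show "g y \<bullet> d \<le> - \<kappa> * (norm d)\<^sup>2" by simp
  show "norm (g y) \<le> L * norm d" using hess2_norm_le[OF lip d] by simp
  have "\<kappa> * norm d * norm d \<le> norm (g y) * norm d"
    using pos norm_cauchy_schwarz[of "- g y" d] by (simp add: power2_eq_square)
  then show "\<kappa> * norm d \<le> norm (g y)"
    by (cases "d = 0") (auto dest: mult_right_le_imp_le)
qed

lemma armijo_Least_ge:
  fixes phi :: "'a::euclidean_space \<Rightarrow> real"
  assumes grad: "\<And>x. (phi has_derivative (\<lambda>h. g x \<bullet> h)) (at x)"
    and lip: "L-lipschitz_on (ball p r) g" and "y \<in> ball p (r / 2)"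
    and descent: "g y \<bullet> d \<le> - \<kappa> * (norm d)\<^sup>2" and "norm d \<le> D" "\<kappa> \<ge> 0"
    and "\<exists>j. armijo phi g \<sigma> \<beta> y d j" "\<sigma> \<le> 1" "0 < \<beta>" "\<beta> < 1"
  shows "min 1 (\<beta> * min (r / 2 / (D + 1)) ((1 - \<sigma>) * \<kappa> / (L + 1)))
           \<le> \<beta> ^ (LEAST j. armijo phi g \<sigma> \<beta> y d j)"
proof (rule power_Least_ge[OF assms(7,9,10)])
  fix j assume j: "\<beta> ^ j \<le> min (r / 2 / (D + 1)) ((1 - \<sigma>) * \<kappa> / (L + 1))"
  have "L \<ge> 0" "D \<ge> 0" using lipschitz_on_nonneg[OF lip] \<open>norm d \<le> D\<close> norm_ge_zero order_trans by blast+
  have "r > 0" using \<open>y \<in> ball p (r / 2)\<close> zero_le_dist[of p y] by (simp del: zero_le_dist)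
  have "\<beta> ^ j * norm d \<le> r / 2 / (D + 1) * D"
    using j \<open>norm d \<le> D\<close> \<open>0 < \<beta>\<close> \<open>r > 0\<close> \<open>D \<ge> 0\<close> by (intro mult_mono) auto
  also have "\<dots> < r / 2" using \<open>D \<ge> 0\<close> \<open>r > 0\<close> by (simp add: field_simps)
  finally have "y + \<beta> ^ j *\<^sub>R d \<in> ball p r"
    using \<open>y \<in> ball p (r / 2)\<close> dist_triangle[of p "y + \<beta> ^ j *\<^sub>R d" y] \<open>0 < \<beta>\<close> by (simp add: dist_norm)
  moreover have "L * \<beta> ^ j \<le> (1 - \<sigma>) * \<kappa>"
  proof -
    have "(L + 1) * \<beta> ^ j \<le> (1 - \<sigma>) * \<kappa>"
      using j \<open>L \<ge> 0\<close> by (simp add: le_divide_eq mult.commute)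
    moreover have "0 \<le> \<beta> ^ j" using \<open>0 < \<beta>\<close> by simp
    ultimately show ?thesis by (simp add: algebra_simps)
  qed
  moreover have "y \<in> ball p r" using \<open>y \<in> ball p (r / 2)\<close> \<open>r > 0\<close> by simp
  ultimately show "armijo phi g \<sigma> \<beta> y d j"
    using armijo_if_small_step[OF grad lip _ _ descent] \<open>\<sigma> \<le> 1\<close> \<open>0 < \<beta>\<close> by blast
qed

lemma gdn_step_decrease_ge:
  fixes phi :: "'a::euclidean_space \<Rightarrow> real"
  assumes grad: "\<And>x. (phi has_derivative (\<lambda>h. g x \<bullet> h)) (at x)"
    and lip: "L-lipschitz_on (ball p r) g" and pos: "hess2_posdef_on \<kappa> (ball p r) g" and "\<kappa> > 0"
    and D: "norm (g p) + L * r \<le> \<kappa> * D"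
    and y: "y \<in> ball p (r / 2)" "g y \<noteq> 0" and step: "gdn_step phi g \<sigma> \<beta> y y'"
    and "0 < \<sigma>" "\<sigma> < 1" "0 < \<beta>" "\<beta> < 1"
  shows "phi y' \<le> phi y - \<sigma> * min 1 (\<beta> * min (r / 2 / (D + 1)) ((1 - \<sigma>) * \<kappa> / (L + 1)))
                             * (\<kappa> * (norm (g y) / (L + 1))\<^sup>2)"
proof -
  define \<tau> where "\<tau> = min 1 (\<beta> * min (r / 2 / (D + 1)) ((1 - \<sigma>) * \<kappa> / (L + 1)))"
  have "L \<ge> 0" using lipschitz_on_nonneg[OF lip] .
  have "y \<in> ball p r" "r > 0" using y(1) zero_le_dist[of p y] unfolding mem_ball by linarith+
  obtain d where d: "- g y \<in> hess2 g y d" and "\<exists>j. armijo phi g \<sigma> \<beta> y d j"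
    and y': "y' = y + \<beta> ^ (LEAST j. armijo phi g \<sigma> \<beta> y d j) *\<^sub>R d"
    using step y(2) unfolding gdn_step_def by auto
  note bounds = newton_direction_bounds[OF lip open_ball \<open>y \<in> ball p r\<close> pos d]
  define t where "t = \<beta> ^ (LEAST j. armijo phi g \<sigma> \<beta> y d j)"
  have "norm (g y - g p) \<le> L * norm (y - p)"
    using lipschitz_on_normD[OF lip \<open>y \<in> ball p r\<close>, of p] \<open>r > 0\<close> by simp
  also have "\<dots> \<le> L * r"
    using \<open>y \<in> ball p r\<close> \<open>L \<ge> 0\<close> by (intro mult_left_mono) (auto simp: dist_norm norm_minus_commute)
  finally have "\<kappa> * norm d \<le> \<kappa> * D"
    using bounds(3) norm_triangle_ineq2[of "g y" "g p"] D by linarith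
  then have "\<tau> \<le> t"
    unfolding \<tau>_def t_def using armijo_Least_ge[OF grad lip y(1) bounds(1)] \<open>\<exists>j. armijo phi g \<sigma> \<beta> y d j\<close>
      \<open>\<kappa> > 0\<close> \<open>\<sigma> < 1\<close> \<open>0 < \<beta>\<close> \<open>\<beta> < 1\<close> by simp
  have "norm (g y) \<le> (L + 1) * norm d" using bounds(2) norm_ge_zero[of d] by (simp add: algebra_simps del: norm_ge_zero)
  then have "(norm (g y) / (L + 1))\<^sup>2 \<le> (norm d)\<^sup>2"
    using \<open>L \<ge> 0\<close> by (intro power_mono) (simp_all add: pos_divide_le_eq mult.commute)
  have "phi y' \<le> phi y + \<sigma> * t * (g y \<bullet> d)"
    using LeastI_ex[OF \<open>\<exists>j. armijo phi g \<sigma> \<beta> y d j\<close>] y' by (simp add: armijo_def t_def)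
  also have "\<dots> \<le> phi y - \<sigma> * t * (\<kappa> * (norm d)\<^sup>2)"
    using mult_left_mono[OF bounds(1), of "\<sigma> * t"] \<open>0 < \<sigma>\<close> \<open>0 < \<beta>\<close> by (simp add: t_def)
  also have "\<dots> \<le> phi y - \<sigma> * \<tau> * (\<kappa> * (norm (g y) / (L + 1))\<^sup>2)"
  proof -
    have "\<tau> * (norm (g y) / (L + 1))\<^sup>2 \<le> t * (norm d)\<^sup>2"
      using \<open>\<tau> \<le> t\<close> \<open>(norm (g y) / (L + 1))\<^sup>2 \<le> (norm d)\<^sup>2\<close> \<open>0 < \<beta>\<close>
      by (intro mult_mono) (auto simp: t_def)
    from mult_left_mono[OF this, of "\<sigma> * \<kappa>"] show ?thesis
      using \<open>0 < \<sigma>\<close> \<open>\<kappa> > 0\<close> by (simp add: algebra_simps)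
  qed
  finally show ?thesis by (simp add: \<tau>_def)
qed

lemma gdn_step_uniform_decrease:
  fixes phi :: "'a::euclidean_space \<Rightarrow> real"
  assumes grad: "\<And>x. (phi has_derivative (\<lambda>h. g x \<bullet> h)) (at x)"
    and lip: "L-lipschitz_on (ball p r) g" and "r > 0" "\<kappa> > 0"
    and pos: "hess2_posdef_on \<kappa> (ball p r) g"
    and "c > 0" "0 < \<sigma>" "\<sigma> < 1" "0 < \<beta>" "\<beta> < 1"
  obtains \<delta> where "\<delta> > 0"
    "\<And>y y'. y \<in> ball p (r / 2) \<Longrightarrow> c \<le> norm (g y) \<Longrightarrow> gdn_step phi g \<sigma> \<beta> y y' \<Longrightarrow> phi y' \<le> phi y - \<delta>"
proof -
  define D where "D = (norm (g p) + L * r) / \<kappa>"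
  define \<tau> where "\<tau> = min 1 (\<beta> * min (r / 2 / (D + 1)) ((1 - \<sigma>) * \<kappa> / (L + 1)))"
  have "L \<ge> 0" using lipschitz_on_nonneg[OF lip] .
  then have "D \<ge> 0" using \<open>r > 0\<close> \<open>\<kappa> > 0\<close> by (simp add: D_def)
  then have "\<tau> > 0" using \<open>L \<ge> 0\<close> \<open>r > 0\<close> \<open>\<kappa> > 0\<close> \<open>\<sigma> < 1\<close> \<open>0 < \<beta>\<close> by (simp add: \<tau>_def)
  have "norm (g p) + L * r \<le> \<kappa> * D" using \<open>\<kappa> > 0\<close> by (simp add: D_def)
  note decrease = gdn_step_decrease_ge[OF grad lip pos \<open>\<kappa> > 0\<close> this]
  have "phi y' \<le> phi y - \<sigma> * \<tau> * (\<kappa> * (c / (L + 1))\<^sup>2)"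
    if "y \<in> ball p (r / 2)" "c \<le> norm (g y)" "gdn_step phi g \<sigma> \<beta> y y'" for y y'
  proof -
    have "(c / (L + 1))\<^sup>2 \<le> (norm (g y) / (L + 1))\<^sup>2"
      using that(2) \<open>c > 0\<close> \<open>L \<ge> 0\<close> by (intro power_mono divide_right_mono) auto
    then show ?thesis
      using decrease[OF that(1) _ that(3) assms(7-10)] that(2) \<open>c > 0\<close> \<open>0 < \<sigma>\<close> \<open>\<tau> > 0\<close> \<open>\<kappa> > 0\<close>
      unfolding \<tau>_def[symmetric] by (smt (verit) mult_left_mono mult_pos_pos norm_zero)
  qed
  moreover have "\<sigma> * \<tau> * (\<kappa> * (c / (L + 1))\<^sup>2) > 0"
    using \<open>0 < \<sigma>\<close> \<open>\<tau> > 0\<close> \<open>\<kappa> > 0\<close> \<open>c > 0\<close> \<open>L \<ge> 0\<close> by simp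
  ultimately show thesis using that by blast
qed

section \<open>The damped Newton iteration\<close>

lemma gdn_step_descent:
  fixes phi :: "'a::euclidean_space \<Rightarrow> real"
  assumes "gdn_step phi g \<sigma> \<beta> x x'" "loc_lipschitz g" "hess2_posdef g x" "0 \<le> \<sigma>" "0 < \<beta>"
  shows "phi x' \<le> phi x"
proof (cases "g x = 0")
  case False
  then obtain d where d: "- g x \<in> hess2 g x d" and "\<exists>j. armijo phi g \<sigma> \<beta> x d j"
    and x': "x' = x + \<beta> ^ (LEAST j. armijo phi g \<sigma> \<beta> x d j) *\<^sub>R d"
    using assms(1) unfolding gdn_step_def by auto
  define j where "j = (LEAST j. armijo phi g \<sigma> \<beta> x d j)"
  have "armijo phi g \<sigma> \<beta> x d j"
    unfolding j_def by (rule LeastI_ex[OF \<open>\<exists>j. armijo phi g \<sigma> \<beta> x d j\<close>])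
  moreover have "\<sigma> * \<beta> ^ j * (g x \<bullet> d) \<le> 0"
    using newton_direction_descent[OF assms(2,3) False d] assms(4,5) by (simp add: mult_nonneg_nonpos)
  moreover have "x' = x + \<beta> ^ j *\<^sub>R d" using x' by (simp add: j_def)
  ultimately show ?thesis by (simp add: armijo_def)
qed (use assms(1) in \<open>simp add: gdn_step_def\<close>)

lemma gdn_run_sublevel:
  fixes phi :: "'a::euclidean_space \<Rightarrow> real"
  assumes run: "gdn_run phi g \<sigma> \<beta> x0 x N" and "loc_lipschitz g"
    and posdef: "\<And>y. phi y \<le> phi x0 \<Longrightarrow> hess2_posdef g y" and "0 \<le> \<sigma>" "0 < \<beta>"
  shows "k \<le> N \<Longrightarrow> phi (x k) \<le> phi x0"
proof (induction k)
  case (Suc k)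
  then have "phi (x k) \<le> phi x0" by simp
  moreover have "gdn_step phi g \<sigma> \<beta> (x k) (x (Suc k))" using run Suc.prems by (simp add: gdn_run_def)
  ultimately show ?case
    using gdn_step_descent[OF _ \<open>loc_lipschitz g\<close> posdef \<open>0 \<le> \<sigma>\<close> \<open>0 < \<beta>\<close>] by fastforce
qed (use run in \<open>simp add: gdn_run_def\<close>)

lemma limit_point_of_decreasing_le:
  fixes f :: "nat \<Rightarrow> real"
  assumes "\<And>k. f (Suc k) \<le> f k" "strict_mono s" "(\<lambda>n. f (s n)) \<longlonglongrightarrow> l"
  shows "l \<le> f k"
proof (rule LIMSEQ_le_const2[OF assms(3)], intro exI allI impI)
  fix n assume "k \<le> n"
  then show "f (s n) \<le> f k"
    using seq_suble[OF assms(2), of n] decseqD[OF decseq_SucI[where X = f, OF assms(1)]] by simp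
qed

lemma gdn_limit_point_critical:
  fixes phi :: "'a::euclidean_space \<Rightarrow> real"
  assumes grad: "\<And>x. (phi has_derivative (\<lambda>h. g x \<bullet> h)) (at x)"
    and lip: "L-lipschitz_on (ball p r) g" and "r > 0" "\<kappa> > 0"
    and pos: "hess2_posdef_on \<kappa> (ball p r) g"
    and steps: "\<And>k. gdn_step phi g \<sigma> \<beta> (x k) (x (Suc k))" and lower: "\<And>k. phi p \<le> phi (x k)"
    and lim: "(\<lambda>n. x (s n)) \<longlonglongrightarrow> p" and "0 < \<sigma>" "\<sigma> < 1" "0 < \<beta>" "\<beta> < 1"
  shows "g p = 0"
proof (rule ccontr)
  assume "g p \<noteq> 0"
  have "norm (g p) / 2 > 0" using \<open>g p \<noteq> 0\<close> by simp
  obtain \<delta> where "\<delta> > 0" and decrease: "\<And>y y'. y \<in> ball p (r / 2) \<Longrightarrow> norm (g p) / 2 \<le> norm (g y) \<Longrightarrow>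
      gdn_step phi g \<sigma> \<beta> y y' \<Longrightarrow> phi y' \<le> phi y - \<delta>"
    using gdn_step_uniform_decrease[OF grad lip \<open>r > 0\<close> \<open>\<kappa> > 0\<close> pos \<open>norm (g p) / 2 > 0\<close> assms(9-12)]
    by blast
  have "isCont g p"
    using continuous_on_interior[OF lipschitz_on_continuous_on[OF lip]] \<open>r > 0\<close> by simp
  have "eventually (\<lambda>n. x (s n) \<in> ball p (r / 2)) sequentially"
    using lim \<open>r > 0\<close> by (intro topological_tendstoD) auto
  moreover have "eventually (\<lambda>n. norm (g p) / 2 < norm (g (x (s n)))) sequentially"
    using tendsto_norm[OF isCont_tendsto_compose[OF \<open>isCont g p\<close> lim]] \<open>g p \<noteq> 0\<close>
    by (intro order_tendstoD(1)) auto
  moreover have "eventually (\<lambda>n. phi (x (s n)) < phi p + \<delta>) sequentially"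
    using isCont_tendsto_compose[OF has_derivative_continuous[OF grad] lim] \<open>\<delta> > 0\<close>
    by (intro order_tendstoD(2)) auto
  ultimately have "eventually (\<lambda>n. x (s n) \<in> ball p (r / 2) \<and> norm (g p) / 2 < norm (g (x (s n)))
      \<and> phi (x (s n)) < phi p + \<delta>) sequentially"
    by eventually_elim blast
  then obtain n where n: "x (s n) \<in> ball p (r / 2)" "norm (g p) / 2 < norm (g (x (s n)))"
    "phi (x (s n)) < phi p + \<delta>"
    using eventually_happens'[OF trivial_limit_sequentially] by blast
  have "phi (x (Suc (s n))) \<le> phi (x (s n)) - \<delta>"
    using decrease[OF n(1) less_imp_le[OF n(2)] steps] .
  then have "phi (x (Suc (s n))) < phi p" using n(3) by simp
  then show False using lower[of "Suc (s n)"] by simp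
qed

lemma gdn_run_well_defined:
  fixes phi :: "'a::euclidean_space \<Rightarrow> real"
  assumes grad: "\<And>x. (phi has_derivative (\<lambda>h. g x \<bullet> h)) (at x)" and lip: "loc_lipschitz g"
    and posdef: "\<And>y. phi y \<le> phi x0 \<Longrightarrow> hess2_posdef g y"
    and run: "gdn_run phi g \<sigma> \<beta> x0 x N" and "0 < \<sigma>" "\<sigma> < 1" "0 < \<beta>" "\<beta> < 1"
  shows "(\<forall>k\<le>N. phi (x k) \<le> phi x0) \<and>
    (g (x N) \<noteq> 0 \<longrightarrow> (\<exists>d. - g (x N) \<in> hess2 g (x N) d) \<and>
       (\<forall>d. - g (x N) \<in> hess2 g (x N) d \<longrightarrow> (\<exists>j. armijo phi g \<sigma> \<beta> (x N) d j)))"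
proof -
  have sublevel: "\<forall>k\<le>N. phi (x k) \<le> phi x0"
    using gdn_run_sublevel[OF run lip posdef] \<open>0 < \<sigma>\<close> \<open>0 < \<beta>\<close> by simp
  then have "hess2_posdef g (x N)" using posdef by simp
  moreover have "\<exists>j. armijo phi g \<sigma> \<beta> (x N) d j" if "g (x N) \<noteq> 0" "- g (x N) \<in> hess2 g (x N) d" for d
    using armijo_exists[OF grad \<open>\<sigma> < 1\<close> \<open>0 < \<beta>\<close> \<open>\<beta> < 1\<close> newton_direction_descent[OF lip _ that]]
      \<open>hess2_posdef g (x N)\<close> by blast
  ultimately show ?thesis using sublevel hess2_posdef_surjective[OF lip] by blast
qed

lemma gdn_limit_point_tilt_stable:
  fixes phi :: "'a::euclidean_space \<Rightarrow> real"
  assumes grad: "\<And>x. (phi has_derivative (\<lambda>h. g x \<bullet> h)) (at x)" and lip: "loc_lipschitz g"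
    and posdef: "\<And>y. phi y \<le> phi x0 \<Longrightarrow> hess2_posdef g y"
    and runs: "\<And>N. gdn_run phi g \<sigma> \<beta> x0 x N"
    and "strict_mono s" "(x \<circ> s) \<longlonglongrightarrow> p" and "0 < \<sigma>" "\<sigma> < 1" "0 < \<beta>" "\<beta> < 1"
  shows "tilt_stable phi p"
proof -
  have steps: "gdn_step phi g \<sigma> \<beta> (x k) (x (Suc k))" for k
    using runs[of "Suc k"] by (simp add: gdn_run_def)
  have sublevel: "phi (x k) \<le> phi x0" for k
    using gdn_run_sublevel[OF runs[of k] lip posdef _ \<open>0 < \<beta>\<close> order_refl] \<open>0 < \<sigma>\<close> by simp
  have decreasing: "phi (x (Suc k)) \<le> phi (x k)" for k
    using gdn_step_descent[OF steps lip posdef[OF sublevel]] \<open>0 < \<sigma>\<close> \<open>0 < \<beta>\<close> by simp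
  have lim: "(\<lambda>n. x (s n)) \<longlonglongrightarrow> p" using \<open>(x \<circ> s) \<longlonglongrightarrow> p\<close> by (simp add: o_def)
  have lower: "phi p \<le> phi (x k)" for k
    using limit_point_of_decreasing_le[where f = "\<lambda>k. phi (x k)", OF decreasing \<open>strict_mono s\<close>]
      isCont_tendsto_compose[OF has_derivative_continuous[OF grad] lim] by blast
  obtain r \<kappa> L where "r > 0" "\<kappa> > 0" "L-lipschitz_on (ball p r) g" "strongly_monotone_on \<kappa> (ball p r) g"
    "hess2_posdef_on \<kappa> (ball p r) g"
    using hess2_posdef_local_structure[OF lip posdef[OF order_trans[OF lower sublevel]]] by blast
  moreover from this have "g p = 0"
    using gdn_limit_point_critical[OF grad _ _ _ _ steps lower lim] assms(7-10) by blast
  ultimately show ?thesis using tilt_stable_if_strongly_monotone_on[OF grad] by blast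
qed

theorem theorem3p4:
  fixes phi :: "'a::euclidean_space \<Rightarrow> real" and g :: "'a \<Rightarrow> 'a"
    and x0 :: 'a and \<sigma> \<beta> :: real
  assumes C11: "is_C11 phi g"
    and pd: "\<forall>x\<in>{x. phi x \<le> phi x0}. \<forall>u z. u \<noteq> 0 \<and> z \<in> hess2 g x u \<longrightarrow> z \<bullet> u > 0"
    and sigma: "0 < \<sigma>" "\<sigma> < 1/2"
    and beta: "0 < \<beta>" "\<beta> < 1"
  shows "(\<forall>x N. gdn_run phi g \<sigma> \<beta> x0 x N \<longrightarrow>
            (\<forall>k\<le>N. x k \<in> {y. phi y \<le> phi x0}) \<and>
            (g (x N) \<noteq> 0 \<longrightarrow>
               (\<exists>d. - g (x N) \<in> hess2 g (x N) d) \<and>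
               (\<forall>d. - g (x N) \<in> hess2 g (x N) d \<longrightarrow> (\<exists>j. armijo phi g \<sigma> \<beta> (x N) d j))))
       \<and> (\<forall>x. (\<forall>N. gdn_run phi g \<sigma> \<beta> x0 x N) \<longrightarrow>
            (\<forall>p. (\<exists>r. strict_mono r \<and> (x \<circ> r) \<longlonglongrightarrow> p) \<longrightarrow> tilt_stable phi p))"
proof -
  have grad: "\<And>x. (phi has_derivative (\<lambda>h. g x \<bullet> h)) (at x)" and lip: "loc_lipschitz g"
    using C11 unfolding is_C11_def by auto
  have posdef: "hess2_posdef g y" if "phi y \<le> phi x0" for y
    using pd that unfolding hess2_posdef_def by blast
  have "\<sigma> < 1" using sigma by simp
  show ?thesis
  proof (rule conjI; intro allI impI)
    fix x N assume "gdn_run phi g \<sigma> \<beta> x0 x N"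
    from gdn_run_well_defined[OF grad lip posdef this sigma(1) \<open>\<sigma> < 1\<close> beta]
    show "(\<forall>k\<le>N. x k \<in> {y. phi y \<le> phi x0}) \<and> (g (x N) \<noteq> 0 \<longrightarrow> (\<exists>d. - g (x N) \<in> hess2 g (x N) d) \<and>
        (\<forall>d. - g (x N) \<in> hess2 g (x N) d \<longrightarrow> (\<exists>j. armijo phi g \<sigma> \<beta> (x N) d j)))" by simp
  next
    fix x p assume runs: "\<forall>N. gdn_run phi g \<sigma> \<beta> x0 x N" and "\<exists>r. strict_mono r \<and> (x \<circ> r) \<longlonglongrightarrow> p"
    then obtain s where "strict_mono s" "(x \<circ> s) \<longlonglongrightarrow> p" by blast
    from gdn_limit_point_tilt_stable[OF grad lip posdef runs[rule_format] this sigma(1) \<open>\<sigma> < 1\<close> beta]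
    show "tilt_stable phi p" .
  qed
qed

end
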